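(* In the setting described in the context, let $\sigma_w,\sigma_v$ be real scalars and let $\Pi_\tau(s)=W^{1/2}\tilde\Sigma_\tau(s)$, where $$\tilde\Sigma_\tau(s)=R^T\big(sI+L_{e,s}^\tau RWR^T\big)^{-1}\begin{bmatrix}\sigma_wD_\tau^TE^{-1/2} & -\sigma_vL_{e,s}^\tau RW^{1/2}\end{bmatrix}.$$ Then $\|\Pi_\tau\|_\infty^2=\bar\sigma(\sigma_w^2X+\sigma_v^2Y)$, where $$X=W^{1/2}R^T\big(RWR^TL_{e,s}^\tau RWR^T\big)^{-1}RW^{1/2},\qquad Y=W^{1/2}R^T\big(RWR^T\big)^{-1}RW^{1/2}.$$
   Context: Let $\mathcal G$ be an undirected, connected graph without self-loops, with node set $\{1,\dots,n\}$ ($n\ge2$) and edge set $\mathcal E$, $m=|\mathcal E|$. Give each edge an arbitrary orientation; the incidence matrix $D\in\mathbb R^{n\times m}$ has $D_{il}=1$ if node $i$ is the initial node of edge $l$, $-1$ if it is the terminal node, and $0$ otherwise. Fix a spanning tree $\mathcal G_\tau$ and order the edges so the first $n-1$ are tree edges; write $D=[D_\tau\ D_c]$ with $D_\tau\in\mathbb R^{n\times(n-1)}$. Set $T_\tau^c=(D_\tau^TD_\tau)^{-1}D_\tau^TD_c$ and $R=[I_{n-1}\ T_\tau^c]\in\mathbb R^{(n-1)\times m}$. Let $W=\mathrm{diag}(w_1,\dots,w_m)$, $w_l>0$, and $E=\mathrm{diag}(\epsilon_1,\dots,\epsilon_n)$, $\epsilon_i>0$; powers of these diagonal matrices are taken entrywise.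 Define $L_{e,s}^\tau=D_\tau^TE^{-1}D_\tau$. For a stable transfer matrix $\Phi(s)$, $\|\Phi\|_\infty=\sup_{\omega\in\mathbb R}\bar\sigma(\Phi(j\omega))$ where $\bar\sigma$ is the largest singular value. *)

theory Defs
  imports "HOL-Analysis.Analysis" "Jordan_Normal_Form.Matrix" "Jordan_Normal_Form.Char_Poly"
begin

(* Graph on nodes 0..<n with m oriented edges l<m: initial node src l, terminal node tgt l.
   (Node i of the paper corresponds to i-1 here; edge l of the paper to l-1.) *)

definition simple_graph :: "nat \<Rightarrow> nat \<Rightarrow> (nat \<Rightarrow> nat) \<Rightarrow> (nat \<Rightarrow> nat) \<Rightarrow> bool" where
  "simple_graph n m src tgt \<longleftrightarrow>
     (\<forall>l<m. src l < n \<and> tgt l < n \<and> src l \<noteq> tgt l) \<and>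
     (\<forall>l<m. \<forall>l'<m. l \<noteq> l' \<longrightarrow> {src l, tgt l} \<noteq> {src l', tgt l'})"

definition adj_in :: "nat set \<Rightarrow> (nat \<Rightarrow> nat) \<Rightarrow> (nat \<Rightarrow> nat) \<Rightarrow> nat \<Rightarrow> nat \<Rightarrow> bool" where
  "adj_in F src tgt i j \<longleftrightarrow> (\<exists>l\<in>F. (src l = i \<and> tgt l = j) \<or> (src l = j \<and> tgt l = i))"

definition connected_on :: "nat \<Rightarrow> nat set \<Rightarrow> (nat \<Rightarrow> nat) \<Rightarrow> (nat \<Rightarrow> nat) \<Rightarrow> bool" where
  "connected_on n F src tgt \<longleftrightarrow> (\<forall>i<n. \<forall>j<n. (adj_in F src tgt)\<^sup>*\<^sup>* i j)"

definition spanning_tree :: "nat \<Rightarrow> nat set \<Rightarrow> (nat \<Rightarrow> nat) \<Rightarrow> (nat \<Rightarrow> nat) \<Rightarrow> bool" where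
  "spanning_tree n F src tgt \<longleftrightarrow>
     connected_on n F src tgt \<and> (\<forall>l\<in>F. \<not> connected_on n (F - {l}) src tgt)"

definition inc_mat :: "nat \<Rightarrow> nat \<Rightarrow> (nat \<Rightarrow> nat) \<Rightarrow> (nat \<Rightarrow> nat) \<Rightarrow> real mat" where
  "inc_mat n m src tgt = mat n m (\<lambda>(i,l). if i = src l then 1 else if i = tgt l then -1 else 0)"

definition col_block :: "'a mat \<Rightarrow> nat \<Rightarrow> nat \<Rightarrow> 'a mat" where
  "col_block A c0 k = mat (dim_row A) k (\<lambda>(i,j). A $$ (i, c0 + j))"

definition hcat :: "'a mat \<Rightarrow> 'a mat \<Rightarrow> 'a mat" where
  "hcat A B = mat (dim_row A) (dim_col A + dim_col B)
     (\<lambda>(i,j). if j < dim_col A then A $$ (i,j) else B $$ (i, j - dim_col A))"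

(* matrix inverse of a square matrix (meaningful when it is invertible) *)
definition minv :: "'a :: field mat \<Rightarrow> 'a mat" where
  "minv A = (SOME B. B \<in> carrier_mat (dim_row A) (dim_row A) \<and>
                     A * B = 1\<^sub>m (dim_row A) \<and> B * A = 1\<^sub>m (dim_row A))"

definition cadj :: "complex mat \<Rightarrow> complex mat" where
  "cadj A = mat (dim_col A) (dim_row A) (\<lambda>(i,j). cnj (A $$ (j,i)))"

definition sigma_max :: "complex mat \<Rightarrow> real" where
  "sigma_max A = sqrt (Max {Re k | k. eigenvalue (cadj A * A) k})"

definition cmat :: "real mat \<Rightarrow> complex mat" where
  "cmat A = map_mat complex_of_real A"

definition hinf_norm :: "(complex \<Rightarrow> complex mat) \<Rightarrow> real" where
  "hinf_norm Phi = (SUP \<omega>::real. sigma_max (Phi (\<i> * complex_of_real \<omega>)))"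


(* Quantities of the paper, for graph data (n,m,src,tgt); tree edges are 0..<n-1 *)
definition Dtau :: "nat \<Rightarrow> nat \<Rightarrow> (nat \<Rightarrow> nat) \<Rightarrow> (nat \<Rightarrow> nat) \<Rightarrow> real mat" where
  "Dtau n m src tgt = col_block (inc_mat n m src tgt) 0 (n-1)"

definition Dc :: "nat \<Rightarrow> nat \<Rightarrow> (nat \<Rightarrow> nat) \<Rightarrow> (nat \<Rightarrow> nat) \<Rightarrow> real mat" where
  "Dc n m src tgt = col_block (inc_mat n m src tgt) (n-1) (m-(n-1))"

definition Ttc :: "nat \<Rightarrow> nat \<Rightarrow> (nat \<Rightarrow> nat) \<Rightarrow> (nat \<Rightarrow> nat) \<Rightarrow> real mat" where
  "Ttc n m src tgt = minv (transpose_mat (Dtau n m src tgt) * Dtau n m src tgt)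
                       * transpose_mat (Dtau n m src tgt) * Dc n m src tgt"

definition Rmat :: "nat \<Rightarrow> nat \<Rightarrow> (nat \<Rightarrow> nat) \<Rightarrow> (nat \<Rightarrow> nat) \<Rightarrow> real mat" where
  "Rmat n m src tgt = hcat (1\<^sub>m (n-1)) (Ttc n m src tgt)"

definition Lest :: "nat \<Rightarrow> nat \<Rightarrow> (nat \<Rightarrow> nat) \<Rightarrow> (nat \<Rightarrow> nat) \<Rightarrow> (nat \<Rightarrow> real) \<Rightarrow> real mat" where
  "Lest n m src tgt \<epsilon> = transpose_mat (Dtau n m src tgt) * mat_diag n (\<lambda>i. 1 / \<epsilon> i) * Dtau n m src tgt"

end

theory Submission
  imports Defs "Jordan_Normal_Form.Spectral_Radius"
begin

(* Write L for L_{e,s}^tau, A = R W R^T and M = L A.  As L and A are positive definite, the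
   eigenvalues of M are positive reals, and both sides of the identity equal
   lambda = max { sigma_w^2 / t + sigma_v^2 | t eigenvalue of M }.

   Left side: the input matrix G of Pi_tau satisfies G G^T = sigma_w^2 L + sigma_v^2 L A L.  From an
   eigenvector of Pi_tau(i omega)^H Pi_tau(i omega) for mu <> 0 one obtains a vector u <> 0 with
   (sigma_v^2 - mu) M^2 u + sigma_w^2 M u - mu omega^2 u = 0, so some eigenvalue t of M is a root of this
   quadratic and mu = (sigma_v^2 t^2 + sigma_w^2 t) / (t^2 + omega^2) <= lambda.  At omega = 0 the bound is
   attained by G^T L^-1 x for an eigenvector x of M.

   Right side: S = sigma_w^2 X + sigma_v^2 Y is symmetric, so sigma_max(S)^2 is the largest eigenvalue
   of S^2.  In the same way every eigenvalue mu <> 0 of S^2 satisfies mu t^2 = (sigma_v^2 t + sigma_w^2)^2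
   for an eigenvalue t of M, and S W^(1/2) R^T x = (sigma_w^2 / t + sigma_v^2) W^(1/2) R^T x for an
   eigenvector x of M for t.  Hence sigma_max(S) = lambda = ||Pi_tau||_inf^2. *)

section \<open>Matrix algebra\<close>

text \<open>Library lemmas with their carrier hypotheses replaced by dimension equations, which the
  simplifier can discharge.\<close>

lemma assoc_mult_mat_vec_dim:
  "dim_col A = dim_row B \<Longrightarrow> dim_col B = dim_vec v \<Longrightarrow> (A * B) *\<^sub>v v = A *\<^sub>v (B *\<^sub>v v)"
  by (rule assoc_mult_mat_vec[of _ "dim_row A" "dim_col A" _ "dim_col B"])
    (auto intro!: carrier_matI carrier_vecI)

lemma add_mult_distrib_mat_vec_dim:
  "dim_row A = dim_row B \<Longrightarrow> dim_col A = dim_col B \<Longrightarrow> dim_col A = dim_vec v \<Longrightarrow>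
   (A + B) *\<^sub>v v = A *\<^sub>v v + B *\<^sub>v v"
  by (rule add_mult_distrib_mat_vec[of _ "dim_row A" "dim_col A"]) (auto intro!: carrier_matI carrier_vecI)

lemma mult_add_distrib_mat_vec_dim:
  "dim_col A = dim_vec u \<Longrightarrow> dim_vec v = dim_vec u \<Longrightarrow> A *\<^sub>v (u + v) = A *\<^sub>v u + A *\<^sub>v v"
  by (rule mult_add_distrib_mat_vec[of _ "dim_row A" "dim_col A"]) (auto intro!: carrier_matI carrier_vecI)

lemma smult_mat_mult_vec_dim: "dim_col A = dim_vec v \<Longrightarrow> (c \<cdot>\<^sub>m A) *\<^sub>v v = c \<cdot>\<^sub>v (A *\<^sub>v v)"
  by (intro eq_vecI) (auto simp: mult_mat_vec_def scalar_prod_def sum_distrib_left mult.assoc)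

lemma mult_mat_vec_smult_dim:
  "dim_col A = dim_vec v \<Longrightarrow> A *\<^sub>v ((c :: 'a :: field) \<cdot>\<^sub>v v) = c \<cdot>\<^sub>v (A *\<^sub>v v)"
  by (rule mult_mat_vec[of _ "dim_row A" "dim_col A"]) (auto intro!: carrier_matI carrier_vecI)

lemma one_mult_mat_vec_dim: "dim_vec v = k \<Longrightarrow> 1\<^sub>m k *\<^sub>v v = (v :: 'a :: semiring_1 vec)"
  by (rule one_mult_mat_vec) (auto intro!: carrier_vecI)

lemma mult_mat_zero_vec: "dim_col A = k \<Longrightarrow> A *\<^sub>v 0\<^sub>v k = 0\<^sub>v (dim_row A)"
  by (intro eq_vecI) (auto simp: scalar_prod_def)

lemma assoc_mult_mat_dim:
  "dim_col A = dim_row B \<Longrightarrow> dim_col B = dim_row C \<Longrightarrow> (A * B) * C = A * (B * C)"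
  by (rule assoc_mult_mat[of _ "dim_row A" "dim_col A" _ "dim_col B" _ "dim_col C"])
    (auto intro!: carrier_matI)

lemma transpose_mult_dim:
  "dim_col A = dim_row B \<Longrightarrow>
   transpose_mat (A * B) = transpose_mat B * transpose_mat (A :: 'a :: comm_semiring_0 mat)"
  by (rule transpose_mult[of _ "dim_row A" "dim_col A" _ "dim_col B"]) (auto intro!: carrier_matI)

lemma transpose_smult_add:
  "dim_row A = dim_row B \<Longrightarrow> dim_col A = dim_col B \<Longrightarrow>
   transpose_mat (a \<cdot>\<^sub>m A + b \<cdot>\<^sub>m B) = a \<cdot>\<^sub>m transpose_mat A + b \<cdot>\<^sub>m transpose_mat B"
  by (intro eq_matI) auto

lemma eq_vecI_dim: "dim_vec a = k \<Longrightarrow> dim_vec b = k \<Longrightarrow> (\<And>i. i < k \<Longrightarrow> a $ i = b $ i) \<Longrightarrow> a = b"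
  by (intro eq_vecI) auto

lemma smult_vec_eq_zero_imp:
  assumes "dim_vec v = k" "(c :: 'a :: field) \<noteq> 0" "c \<cdot>\<^sub>v v = 0\<^sub>v k"
  shows "v = 0\<^sub>v k"
proof (rule eq_vecI)
  fix i assume "i < dim_vec (0\<^sub>v k)"
  then show "v $ i = 0\<^sub>v k $ i"
    using assms by (metis index_smult_vec(1) index_zero_vec(1) index_zero_vec(2) mult_eq_0_iff)
qed (use assms in auto)

lemma mult_mat_vec_cancel:
  fixes X :: "'a :: ring mat"
  assumes inj: "\<And>y. y \<in> carrier_vec k \<Longrightarrow> X *\<^sub>v y = 0\<^sub>v k \<Longrightarrow> y = 0\<^sub>v k"
    and X: "X \<in> carrier_mat k k" and a: "dim_vec a = k" and b: "dim_vec b = k"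
    and eq: "X *\<^sub>v a = X *\<^sub>v b"
  shows "a = b"
proof -
  have "X *\<^sub>v (a - b) = X *\<^sub>v a - X *\<^sub>v b"
    by (rule mult_minus_distrib_mat_vec[OF X]) (use a b in \<open>auto intro: carrier_vecI\<close>)
  also have "\<dots> = 0\<^sub>v k" unfolding eq using X by (intro eq_vecI) auto
  finally have "a - b = 0\<^sub>v k" by (rule inj[rotated]) (use a b in \<open>auto intro: carrier_vecI\<close>)
  show ?thesis
  proof (rule eq_vecI)
    fix i assume "i < dim_vec b"
    then have "(a - b) $ i = 0" using \<open>a - b = 0\<^sub>v k\<close> b by simp
    then show "a $ i = b $ i" using \<open>i < dim_vec b\<close> a b by simp
  qed (use a b in simp)
qed

lemma dim_mat_diag [simp]: "dim_row (mat_diag k f) = k" "dim_col (mat_diag k f) = k"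
  unfolding mat_diag_def by auto

lemma transpose_mat_diag [simp]: "transpose_mat (mat_diag k f) = mat_diag k f"
  unfolding mat_diag_def by (intro eq_matI) auto

lemma mat_diag_cong: "(\<And>i. i < k \<Longrightarrow> f i = g i) \<Longrightarrow> mat_diag k f = mat_diag k g"
  unfolding mat_diag_def by (intro eq_matI) auto

lemma mat_diag_mult_vec_index:
  assumes "i < k" "dim_vec y = k"
  shows "(mat_diag k f *\<^sub>v y) $ i = f i * y $ i"
proof -
  have "(mat_diag k f *\<^sub>v y) $ i = (\<Sum>j\<in>{0..<k}. (if i = j then f j else 0) * y $ j)"
    using assms by (simp add: mat_diag_def scalar_prod_def)
  also have "\<dots> = (\<Sum>j\<in>{0..<k}. (if i = j then f j * y $ j else 0))"
    by (intro sum.cong) auto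
  also have "\<dots> = f i * y $ i" using assms by simp
  finally show ?thesis .
qed

lemma dim_hcat [simp]:
  "dim_row (hcat A B) = dim_row A" "dim_col (hcat A B) = dim_col A + dim_col B"
  unfolding hcat_def by auto

lemma hcat_mult_transpose:
  fixes A B :: "'a :: comm_ring_1 mat"
  assumes rows: "dim_row A = dim_row B"
  shows "hcat A B * transpose_mat (hcat A B) = A * transpose_mat A + B * transpose_mat B"
proof (rule eq_matI)
  let ?H = "hcat A B" and ?a = "dim_col A" and ?b = "dim_col B"
  fix i j assume "i < dim_row (A * transpose_mat A + B * transpose_mat B)"
    "j < dim_col (A * transpose_mat A + B * transpose_mat B)"
  then have i: "i < dim_row A" and j: "j < dim_row A" using rows by auto
  have "(?H * transpose_mat ?H) $$ (i,j) = (\<Sum>k\<in>{0..<?a+?b}. ?H $$ (i,k) * ?H $$ (j,k))"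
    using i j by (simp add: scalar_prod_def)
  also have "\<dots> = (\<Sum>k\<in>{0..<?a}. ?H $$ (i,k) * ?H $$ (j,k))
                 + (\<Sum>k\<in>{?a..<?a+?b}. ?H $$ (i,k) * ?H $$ (j,k))"
    by (rule sum.atLeastLessThan_concat[symmetric]) auto
  also have "\<dots> = (\<Sum>k\<in>{0..<?a}. ?H $$ (i,k) * ?H $$ (j,k))
                 + (\<Sum>k\<in>{0..<?b}. ?H $$ (i,k+?a) * ?H $$ (j,k+?a))"
    using sum.shift_bounds_nat_ivl[of "\<lambda>k. ?H $$ (i,k) * ?H $$ (j,k)" 0 ?a ?b] by (simp add: add.commute)
  also have "\<dots> = (\<Sum>k\<in>{0..<?a}. A $$ (i,k) * A $$ (j,k)) + (\<Sum>k\<in>{0..<?b}. B $$ (i,k) * B $$ (j,k))"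
    using i j rows by (intro arg_cong2[where f = "(+)"] sum.cong) (auto simp: hcat_def)
  also have "\<dots> = (A * transpose_mat A + B * transpose_mat B) $$ (i,j)"
    using i j rows by (simp add: scalar_prod_def)
  finally show "(?H * transpose_mat ?H) $$ (i,j) = (A * transpose_mat A + B * transpose_mat B) $$ (i,j)" .
qed (use rows in auto)

lemma smult_mult_transpose:
  "(c \<cdot>\<^sub>m A) * transpose_mat (c \<cdot>\<^sub>m A) = c\<^sup>2 \<cdot>\<^sub>m (A * transpose_mat (A :: 'a :: comm_ring_1 mat))"
  by (intro eq_matI) (auto simp: scalar_prod_def sum_distrib_left algebra_simps power2_eq_square)

lemma minv_of_injective:
  fixes X :: "'a :: field mat"
  assumes X: "X \<in> carrier_mat k k"
    and inj: "\<And>v. v \<in> carrier_vec k \<Longrightarrow> X *\<^sub>v v = 0\<^sub>v k \<Longrightarrow> v = 0\<^sub>v k"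
  shows "minv X \<in> carrier_mat k k" "X * minv X = 1\<^sub>m k" "minv X * X = 1\<^sub>m k"
proof -
  have "det X \<noteq> 0" using det_0_iff_vec_prod_zero_field[OF X] inj by auto
  from det_non_zero_imp_unit[OF X this, of "()"]
  obtain B where "B \<in> carrier_mat k k" "X * B = 1\<^sub>m k" "B * X = 1\<^sub>m k"
    unfolding Units_def ring_mat_def by auto
  then have "\<exists>B. B \<in> carrier_mat (dim_row X) (dim_row X) \<and>
      X * B = 1\<^sub>m (dim_row X) \<and> B * X = 1\<^sub>m (dim_row X)"
    using X by auto
  from someI_ex[OF this] X
  show "minv X \<in> carrier_mat k k" "X * minv X = 1\<^sub>m k" "minv X * X = 1\<^sub>m k"
    unfolding minv_def by auto
qed

lemma transpose_minv_sym:
  fixes B :: "'a :: field mat"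
  assumes B: "B \<in> carrier_mat k k" and sym: "transpose_mat B = B"
    and inv: "minv B \<in> carrier_mat k k" "B * minv B = 1\<^sub>m k"
  shows "transpose_mat (minv B) = minv B"
proof -
  have "transpose_mat (minv B) * B = transpose_mat (B * minv B)"
    using B inv(1) by (subst sym[symmetric]) (simp add: transpose_mult)
  then have "transpose_mat (minv B) * B = 1\<^sub>m k" using inv(2) by simp
  then have "transpose_mat (minv B) * B * minv B = minv B" using inv(1) by simp
  moreover have "transpose_mat (minv B) * B * minv B = transpose_mat (minv B)"
    using B inv by (simp add: assoc_mult_mat[of _ k k _ k _ k])
  ultimately show ?thesis by simp
qed

section \<open>Complexification and conjugate transpose\<close>

lemma cmat_carrier [simp]: "A \<in> carrier_mat a b \<Longrightarrow> cmat A \<in> carrier_mat a b"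
  unfolding cmat_def by auto

lemma dim_cmat [simp]: "dim_row (cmat A) = dim_row A" "dim_col (cmat A) = dim_col A"
  unfolding cmat_def by auto

lemma index_cmat [simp]:
  "i < dim_row A \<Longrightarrow> j < dim_col A \<Longrightarrow> cmat A $$ (i,j) = complex_of_real (A $$ (i,j))"
  unfolding cmat_def by simp

lemma cmat_mult: "dim_col A = dim_row B \<Longrightarrow> cmat (A * B) = cmat A * cmat B"
  unfolding cmat_def
  by (rule of_real_hom.mat_hom_mult[of _ "dim_row A" "dim_col A" _ "dim_col B"]) (auto intro!: carrier_matI)

lemma cmat_add: "dim_row A = dim_row B \<Longrightarrow> dim_col A = dim_col B \<Longrightarrow> cmat (A + B) = cmat A + cmat B"
  unfolding cmat_def by (intro eq_matI) auto

lemma cmat_smult: "cmat (c \<cdot>\<^sub>m A) = complex_of_real c \<cdot>\<^sub>m cmat A"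
  unfolding cmat_def by (intro eq_matI) auto

lemma cmat_one: "cmat (1\<^sub>m k) = 1\<^sub>m k"
  unfolding cmat_def by (intro eq_matI) auto

lemma cmat_transpose: "cmat (transpose_mat A) = transpose_mat (cmat A)"
  unfolding cmat_def by (intro eq_matI) auto

lemma cmat_mat_diag: "cmat (mat_diag k f) = mat_diag k (\<lambda>i. complex_of_real (f i))"
  unfolding cmat_def mat_diag_def by (intro eq_matI) auto

lemma cmat_mult_vec_of_real:
  "dim_col A = dim_vec x \<Longrightarrow> cmat A *\<^sub>v map_vec complex_of_real x = map_vec complex_of_real (A *\<^sub>v x)"
  by (intro eq_vecI) (auto simp: mult_mat_vec_def scalar_prod_def cmat_def)

lemma injective_of_cmat_injective:
  assumes A: "A \<in> carrier_mat p k"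
    and inj: "\<And>x. x \<in> carrier_vec k \<Longrightarrow> cmat A *\<^sub>v x = 0\<^sub>v p \<Longrightarrow> x = 0\<^sub>v k"
    and x: "x \<in> carrier_vec k" and Ax: "A *\<^sub>v x = 0\<^sub>v p"
  shows "x = 0\<^sub>v k"
proof -
  have "cmat A *\<^sub>v map_vec complex_of_real x = 0\<^sub>v p"
    using A x by (subst cmat_mult_vec_of_real) (auto simp: Ax)
  then have "map_vec complex_of_real x = 0\<^sub>v k" by (rule inj[rotated]) (use x in simp)
  show ?thesis
  proof (rule eq_vecI)
    fix i assume "i < dim_vec (0\<^sub>v k)"
    then have "map_vec complex_of_real x $ i = 0" using \<open>map_vec complex_of_real x = 0\<^sub>v k\<close> by simp
    then show "x $ i = 0\<^sub>v k $ i" using \<open>i < dim_vec (0\<^sub>v k)\<close> x by simp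
  qed (use x in auto)
qed

lemma dim_cadj [simp]: "dim_row (cadj A) = dim_col A" "dim_col (cadj A) = dim_row A"
  unfolding cadj_def by auto

lemma cadj_mult: "dim_col A = dim_row B \<Longrightarrow> cadj (A * B) = cadj B * cadj A"
  unfolding cadj_def by (intro eq_matI) (auto simp: scalar_prod_def mult.commute)

lemma cadj_one [simp]: "cadj (1\<^sub>m k) = 1\<^sub>m k"
  unfolding cadj_def by (intro eq_matI) auto

lemma cadj_cmat: "cadj (cmat A) = cmat (transpose_mat A)"
  unfolding cadj_def cmat_def by (intro eq_matI) auto

lemma cadj_add: "dim_row A = dim_row B \<Longrightarrow> dim_col A = dim_col B \<Longrightarrow> cadj (A + B) = cadj A + cadj B"
  unfolding cadj_def by (intro eq_matI) auto

lemma cadj_smult: "cadj (c \<cdot>\<^sub>m A) = cnj c \<cdot>\<^sub>m cadj A"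
  unfolding cadj_def by (intro eq_matI) auto

section \<open>Positive definite matrices and eigenvalues\<close>

definition quad_form :: "complex mat \<Rightarrow> complex vec \<Rightarrow> complex" where
  "quad_form A x = (\<Sum>j<dim_vec x. cnj (x $ j) * (A *\<^sub>v x) $ j)"

definition pos_def :: "complex mat \<Rightarrow> bool" where
  "pos_def A \<longleftrightarrow> (\<forall>x \<in> carrier_vec (dim_col A). x \<noteq> 0\<^sub>v (dim_col A) \<longrightarrow>
                      (\<exists>c>0. quad_form A x = complex_of_real c))"

lemma quad_form_zero: "x \<in> carrier_vec k \<Longrightarrow> A *\<^sub>v x = 0\<^sub>v k \<Longrightarrow> quad_form A x = 0"
  unfolding quad_form_def by (auto intro!: sum.neutral)

lemma pos_def_injective:
  assumes "pos_def A" "A \<in> carrier_mat k k" "x \<in> carrier_vec k" "A *\<^sub>v x = 0\<^sub>v k"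
  shows "x = 0\<^sub>v k"
  using assms quad_form_zero[of x k A] unfolding pos_def_def by force

lemma sum_cnj_mult_transpose_cmat:
  assumes F: "F \<in> carrier_mat p q" and z: "z \<in> carrier_vec p" and x: "x \<in> carrier_vec q"
  shows "(\<Sum>j<q. cnj (x $ j) * (transpose_mat (cmat F) *\<^sub>v z) $ j)
       = (\<Sum>i<p. z $ i * cnj ((cmat F *\<^sub>v x) $ i))"
proof -
  have "(\<Sum>j<q. cnj (x $ j) * (transpose_mat (cmat F) *\<^sub>v z) $ j)
      = (\<Sum>j<q. \<Sum>i<p. cnj (x $ j) * (complex_of_real (F $$ (i,j)) * z $ i))"
    using F z x
    by (auto simp: mult_mat_vec_def scalar_prod_def sum_distrib_left lessThan_atLeast0 intro!: sum.cong)
  also have "\<dots> = (\<Sum>i<p. \<Sum>j<q. cnj (x $ j) * (complex_of_real (F $$ (i,j)) * z $ i))"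
    by (rule sum.swap)
  also have "\<dots> = (\<Sum>i<p. z $ i * cnj ((cmat F *\<^sub>v x) $ i))"
    using F z x
    by (auto simp: mult_mat_vec_def scalar_prod_def sum_distrib_left lessThan_atLeast0 intro!: sum.cong)
  finally show ?thesis .
qed

lemma quad_form_transpose_diag_mult:
  assumes F: "F \<in> carrier_mat p q" and x: "x \<in> carrier_vec q"
  shows "quad_form (cmat (transpose_mat F * mat_diag p d * F)) x
       = complex_of_real (\<Sum>i<p. d i * (cmod ((cmat F *\<^sub>v x) $ i))\<^sup>2)"
proof -
  let ?y = "cmat F *\<^sub>v x" and ?d = "mat_diag p (\<lambda>i. complex_of_real (d i))"
  have y: "?y \<in> carrier_vec p" by (rule mult_mat_vec_carrier[OF cmat_carrier[OF F] x])
  have dx: "dim_vec x = q" using x by auto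
  have "cmat (transpose_mat F * mat_diag p d * F) *\<^sub>v x = transpose_mat (cmat F) *\<^sub>v (?d *\<^sub>v ?y)"
    using F x by (simp add: cmat_mult cmat_transpose cmat_mat_diag assoc_mult_mat_vec_dim)
  then have "quad_form (cmat (transpose_mat F * mat_diag p d * F)) x
      = (\<Sum>j<q. cnj (x $ j) * (transpose_mat (cmat F) *\<^sub>v (?d *\<^sub>v ?y)) $ j)"
    unfolding quad_form_def dx by simp
  also have "\<dots> = (\<Sum>i<p. (?d *\<^sub>v ?y) $ i * cnj (?y $ i))"
    by (rule sum_cnj_mult_transpose_cmat[OF F mult_mat_vec_carrier[OF mat_diag_dim y] x])
  also have "\<dots> = (\<Sum>i<p. complex_of_real (d i * (cmod (?y $ i))\<^sup>2))"
    using carrier_vecD[OF y] by (intro sum.cong refl)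
      (auto simp del: index_mult_mat_vec
        simp: mat_diag_mult_vec_index complex_norm_square[symmetric] mult.assoc)
  finally show ?thesis by simp
qed

lemma pos_def_transpose_diag_mult:
  assumes F: "F \<in> carrier_mat p q" and d: "\<And>i. i < p \<Longrightarrow> d i > 0"
    and inj: "\<And>x. x \<in> carrier_vec q \<Longrightarrow> cmat F *\<^sub>v x = 0\<^sub>v p \<Longrightarrow> x = 0\<^sub>v q"
  shows "pos_def (cmat (transpose_mat F * mat_diag p d * F))"
  unfolding pos_def_def
proof (intro ballI impI)
  fix x :: "complex vec" assume "x \<in> carrier_vec (dim_col (cmat (transpose_mat F * mat_diag p d * F)))"
    "x \<noteq> 0\<^sub>v (dim_col (cmat (transpose_mat F * mat_diag p d * F)))"
  then have x: "x \<in> carrier_vec q" "x \<noteq> 0\<^sub>v q" using F by auto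
  let ?y = "cmat F *\<^sub>v x"
  obtain i where i: "i < p" "?y $ i \<noteq> 0"
  proof (rule ccontr)
    assume "\<not> thesis"
    then have "?y = 0\<^sub>v p" using that F by (intro eq_vecI) auto
    then show False using inj x by blast
  qed
  have "0 < (\<Sum>i<p. d i * (cmod (?y $ i))\<^sup>2)"
    using i d by (intro sum_pos2[where i = i]) (auto intro: mult_nonneg_nonneg[OF less_imp_le])
  then show "\<exists>c>0. quad_form (cmat (transpose_mat F * mat_diag p d * F)) x = complex_of_real c"
    unfolding quad_form_transpose_diag_mult[OF F x(1)] by blast
qed

lemma eigenvalueI_index:
  assumes "C \<in> carrier_mat k k" "v \<in> carrier_vec k" "v \<noteq> 0\<^sub>v k"
    and "\<And>i. i < k \<Longrightarrow> (C *\<^sub>v v) $ i = t * v $ i"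
  shows "eigenvalue C t"
  unfolding eigenvalue_def eigenvector_def using assms by (auto intro!: exI[of _ v] eq_vecI)

text \<open>For \<open>L A x = t x\<close> and \<open>y = A x\<close> one has \<open>y\<^sup>H L y = t x\<^sup>H A x\<close>, and both forms are
  positive.\<close>

lemma eigenvalue_mult_pos_def:
  assumes L: "L \<in> carrier_mat k k" and A: "A \<in> carrier_mat k k"
    and pos: "pos_def L" "pos_def A" and ev: "eigenvalue (L * A) t"
  obtains \<tau> where "\<tau> > 0" "t = complex_of_real \<tau>"
proof -
  obtain x where x: "x \<in> carrier_vec k" "x \<noteq> 0\<^sub>v k" "(L * A) *\<^sub>v x = t \<cdot>\<^sub>v x"
    using ev L A unfolding eigenvalue_def eigenvector_def by auto
  define y where "y = A *\<^sub>v x"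
  have y: "y \<in> carrier_vec k" "y \<noteq> 0\<^sub>v k"
    using A x pos_def_injective[OF pos(2) A x(1)] unfolding y_def by auto
  have Ly: "L *\<^sub>v y = t \<cdot>\<^sub>v x" using x L A unfolding y_def by simp
  obtain a where a: "a > 0" "quad_form A x = complex_of_real a"
    using pos(2) x A unfolding pos_def_def by auto
  obtain b where b: "b > 0" "quad_form L y = complex_of_real b"
    using pos(1) y L unfolding pos_def_def by auto
  have "quad_form L y = (\<Sum>j<k. cnj (y $ j) * (t * x $ j))"
    unfolding quad_form_def Ly using y x by (intro sum.cong) auto
  also have "\<dots> = t * cnj (\<Sum>j<k. cnj (x $ j) * y $ j)"
    by (simp add: sum_distrib_left mult.commute mult.left_commute)
  also have "(\<Sum>j<k. cnj (x $ j) * y $ j) = quad_form A x"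
    unfolding quad_form_def y_def using x by simp
  finally have "complex_of_real b = t * complex_of_real a" using a b by simp
  then have "t = complex_of_real (b / a)" using a by (simp add: field_simps)
  with a b show thesis by (intro that[of "b / a"]) auto
qed

lemma complex_quadratic_vieta:
  fixes a b c :: complex
  assumes "a \<noteq> 0"
  obtains \<alpha> \<beta> where "b = - a * (\<alpha> + \<beta>)" "c = a * (\<alpha> * \<beta>)"
proof -
  define d where "d = csqrt (b\<^sup>2 - 4 * a * c)"
  have dd: "d * d = b * b - 4 * a * c" unfolding d_def by (metis power2_csqrt power2_eq_square)
  show thesis
  proof (rule that[of "(- b + d) / (2 * a)" "(- b - d) / (2 * a)"])
    show "b = - a * ((- b + d) / (2 * a) + (- b - d) / (2 * a))" using assms by (simp add: field_simps)
    have "a * ((- b + d) * (- b - d)) = a * (4 * a * c)" by (simp add: algebra_simps dd)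
    then show "c = a * ((- b + d) / (2 * a) * ((- b - d) / (2 * a)))"
      using assms by (simp add: field_simps)
  qed
qed

text \<open>Factor \<open>a t\<^sup>2 + b t + c = a (t - \<alpha>) (t - \<beta>)\<close>: either \<open>(C - \<beta>) u = 0\<close>, or
  \<open>(C - \<beta>) u\<close> is an eigenvector of \<open>C\<close> for \<open>\<alpha>\<close>.\<close>

lemma eigenvalue_of_factored_relation:
  fixes C :: "complex mat"
  assumes C: "C \<in> carrier_mat k k" and u: "u \<in> carrier_vec k" "u \<noteq> 0\<^sub>v k"
    and rel: "\<And>i. i < k \<Longrightarrow> (C *\<^sub>v (C *\<^sub>v u)) $ i - (\<alpha> + \<beta>) * (C *\<^sub>v u) $ i + \<alpha> * \<beta> * u $ i = 0"
  shows "eigenvalue C \<alpha> \<or> eigenvalue C \<beta>"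
proof -
  define w where "w = C *\<^sub>v u - \<beta> \<cdot>\<^sub>v u"
  have w: "w \<in> carrier_vec k" unfolding w_def using C u by auto
  show ?thesis
  proof (cases "w = 0\<^sub>v k")
    case True
    have "(C *\<^sub>v u) $ i = \<beta> * u $ i" if "i < k" for i
      using arg_cong[OF True, of "\<lambda>v. v $ i"] that C u unfolding w_def by simp
    then show ?thesis using eigenvalueI_index[OF C u] by blast
  next
    case False
    have "C *\<^sub>v w = C *\<^sub>v (C *\<^sub>v u) - \<beta> \<cdot>\<^sub>v (C *\<^sub>v u)"
      unfolding w_def using C u by (simp add: mult_minus_distrib_mat_vec mult_mat_vec)
    then have "(C *\<^sub>v w) $ i = \<alpha> * w $ i" if "i < k" for i
      using rel[OF that] that C u unfolding w_def by (simp add: algebra_simps eq_diff_eq)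
    then show ?thesis using eigenvalueI_index[OF C w False] by blast
  qed
qed

lemma eigenvalue_of_quadratic_relation:
  fixes C :: "complex mat"
  assumes C: "C \<in> carrier_mat k k" and u: "u \<in> carrier_vec k" "u \<noteq> 0\<^sub>v k"
    and rel: "\<And>i. i < k \<Longrightarrow> a * (C *\<^sub>v (C *\<^sub>v u)) $ i + b * (C *\<^sub>v u) $ i + c * u $ i = 0"
  shows "\<exists>t. eigenvalue C t \<and> a * t\<^sup>2 + b * t + c = 0"
proof (cases "a = 0")
  case False
  then obtain \<alpha> \<beta> where bc: "b = - a * (\<alpha> + \<beta>)" "c = a * (\<alpha> * \<beta>)"
    using complex_quadratic_vieta by blast
  have "(C *\<^sub>v (C *\<^sub>v u)) $ i - (\<alpha> + \<beta>) * (C *\<^sub>v u) $ i + \<alpha> * \<beta> * u $ i = 0" if "i < k" for i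
  proof -
    have "a * ((C *\<^sub>v (C *\<^sub>v u)) $ i - (\<alpha> + \<beta>) * (C *\<^sub>v u) $ i + \<alpha> * \<beta> * u $ i) = 0"
      using rel[OF that] unfolding bc by (simp add: algebra_simps)
    then show ?thesis using False by simp
  qed
  then have "eigenvalue C \<alpha> \<or> eigenvalue C \<beta>" by (rule eigenvalue_of_factored_relation[OF C u])
  moreover have "a * \<alpha>\<^sup>2 + b * \<alpha> + c = 0" "a * \<beta>\<^sup>2 + b * \<beta> + c = 0"
    unfolding bc by (simp_all add: algebra_simps power2_eq_square)
  ultimately show ?thesis by blast
next
  case a0: True
  show ?thesis
  proof (cases "b = 0")
    case False
    have "(C *\<^sub>v u) $ i = (- c / b) * u $ i" if "i < k" for i
      using rel[OF that] a0 False by (simp add: field_simps add_eq_0_iff2)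
    then show ?thesis using a0 False eigenvalueI_index[OF C u] by (intro exI[of _ "- c / b"]) auto
  next
    case b0: True
    have "c = 0"
    proof (rule ccontr)
      assume "c \<noteq> 0"
      then have "u = 0\<^sub>v k" using rel a0 b0 u(1) by (intro eq_vecI) auto
      then show False using u(2) by simp
    qed
    moreover have "k > 0" using u by (cases k) auto
    then obtain t where "t \<in> spectrum C" using spectrum_non_empty[OF C] by auto
    ultimately show ?thesis using a0 b0 unfolding spectrum_def by auto
  qed
qed

text \<open>Apply \<open>C\<close> to both relations and eliminate \<open>y\<close>; since \<open>cnj s = - s\<close>, the terms
  \<open>s C u\<close> cancel.\<close>

lemma quadratic_relation_of_resolvent:
  fixes C :: "complex mat"
  assumes C: "C \<in> carrier_mat k k" and u: "dim_vec u = k" and y: "dim_vec y = k"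
    and s: "cnj s = - s"
    and E1: "cnj s \<cdot>\<^sub>v y + C *\<^sub>v y = C *\<^sub>v u"
    and E2: "a \<cdot>\<^sub>v y + b \<cdot>\<^sub>v (C *\<^sub>v y) = \<mu> \<cdot>\<^sub>v (s \<cdot>\<^sub>v u + C *\<^sub>v u)"
    and i: "i < k"
  shows "(b - \<mu>) * (C *\<^sub>v (C *\<^sub>v u)) $ i + a * (C *\<^sub>v u) $ i + (- \<mu> * (s * cnj s)) * u $ i = 0"
proof -
  have dims: "dim_row C = k" "dim_col C = k" using C by auto
  have CE1: "cnj s \<cdot>\<^sub>v (C *\<^sub>v y) + C *\<^sub>v (C *\<^sub>v y) = C *\<^sub>v (C *\<^sub>v u)"
    using arg_cong[OF E1, of "(*\<^sub>v) C"] dims y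
    by (simp add: mult_add_distrib_mat_vec_dim mult_mat_vec_smult_dim)
  have CE2: "a \<cdot>\<^sub>v (C *\<^sub>v y) + b \<cdot>\<^sub>v (C *\<^sub>v (C *\<^sub>v y)) = \<mu> \<cdot>\<^sub>v (s \<cdot>\<^sub>v (C *\<^sub>v u) + C *\<^sub>v (C *\<^sub>v u))"
    using arg_cong[OF E2, of "(*\<^sub>v) C"] dims y u
    by (simp add: mult_add_distrib_mat_vec_dim mult_mat_vec_smult_dim)
  let ?u1 = "(C *\<^sub>v u) $ i" and ?u2 = "(C *\<^sub>v (C *\<^sub>v u)) $ i"
    and ?y1 = "(C *\<^sub>v y) $ i" and ?y2 = "(C *\<^sub>v (C *\<^sub>v y)) $ i"
  have e1: "cnj s * y $ i + ?y1 = ?u1" using arg_cong[OF E1, of "\<lambda>x. x $ i"] i dims y by simp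
  have e1': "cnj s * ?y1 + ?y2 = ?u2" using arg_cong[OF CE1, of "\<lambda>x. x $ i"] i dims by simp
  have e2: "a * y $ i + b * ?y1 = \<mu> * (s * u $ i + ?u1)"
    using arg_cong[OF E2, of "\<lambda>x. x $ i"] i dims y u by simp
  have e2': "a * ?y1 + b * ?y2 = \<mu> * (s * ?u1 + ?u2)"
    using arg_cong[OF CE2, of "\<lambda>x. x $ i"] i dims by simp
  have "a * ?u1 + b * ?u2 = cnj s * (a * y $ i + b * ?y1) + (a * ?y1 + b * ?y2)"
    unfolding e1[symmetric] e1'[symmetric] by (simp add: algebra_simps)
  also have "\<dots> = \<mu> * (s * cnj s) * u $ i + \<mu> * ?u2"
    unfolding e2 e2' s by (simp add: algebra_simps)
  finally show ?thesis by (simp add: algebra_simps)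
qed

lemma quadratic_relation_of_square:
  fixes C :: "complex mat"
  assumes C: "C \<in> carrier_mat k k" and a: "dim_vec a = k" and b: "dim_vec b = k"
    and e1: "C *\<^sub>v b = \<alpha> \<cdot>\<^sub>v a + \<beta> \<cdot>\<^sub>v (C *\<^sub>v a)"
    and e2: "\<alpha> \<cdot>\<^sub>v b + \<beta> \<cdot>\<^sub>v (C *\<^sub>v b) = \<mu> \<cdot>\<^sub>v (C *\<^sub>v a)"
    and i: "i < k"
  shows "(\<beta> * \<beta> - \<mu>) * (C *\<^sub>v (C *\<^sub>v a)) $ i + (2 * \<alpha> * \<beta>) * (C *\<^sub>v a) $ i + \<alpha> * \<alpha> * a $ i = 0"
proof -
  have dims: "dim_row C = k" "dim_col C = k" using C by auto
  have Ce1: "C *\<^sub>v (C *\<^sub>v b) = \<alpha> \<cdot>\<^sub>v (C *\<^sub>v a) + \<beta> \<cdot>\<^sub>v (C *\<^sub>v (C *\<^sub>v a))"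
    unfolding e1 using dims a by (simp add: mult_add_distrib_mat_vec_dim mult_mat_vec_smult_dim)
  have Ce2: "\<alpha> \<cdot>\<^sub>v (C *\<^sub>v b) + \<beta> \<cdot>\<^sub>v (C *\<^sub>v (C *\<^sub>v b)) = \<mu> \<cdot>\<^sub>v (C *\<^sub>v (C *\<^sub>v a))"
    using arg_cong[OF e2, of "(*\<^sub>v) C"] dims a b
    by (simp add: mult_add_distrib_mat_vec_dim mult_mat_vec_smult_dim)
  let ?a1 = "(C *\<^sub>v a) $ i" and ?a2 = "(C *\<^sub>v (C *\<^sub>v a)) $ i"
    and ?b1 = "(C *\<^sub>v b) $ i" and ?b2 = "(C *\<^sub>v (C *\<^sub>v b)) $ i"
  have f1: "?b1 = \<alpha> * a $ i + \<beta> * ?a1" using arg_cong[OF e1, of "\<lambda>x. x $ i"] i dims a by simp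
  have f2: "\<alpha> * ?b1 + \<beta> * ?b2 = \<mu> * ?a2" using arg_cong[OF Ce2, of "\<lambda>x. x $ i"] i dims by simp
  have f3: "?b2 = \<alpha> * ?a1 + \<beta> * ?a2" using arg_cong[OF Ce1, of "\<lambda>x. x $ i"] i dims by simp
  have "\<mu> * ?a2 = \<alpha> * (\<alpha> * a $ i + \<beta> * ?a1) + \<beta> * (\<alpha> * ?a1 + \<beta> * ?a2)"
    unfolding f2[symmetric] f1[symmetric] f3[symmetric] ..
  then show ?thesis by (simp add: algebra_simps)
qed

lemma Max_Re_eigenvalues_le:
  fixes X :: "complex mat"
  assumes X: "X \<in> carrier_mat k k" and k: "k > 0" and le: "\<And>\<mu>. eigenvalue X \<mu> \<Longrightarrow> Re \<mu> \<le> B"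
  shows "Max {Re \<mu> | \<mu>. eigenvalue X \<mu>} \<le> B"
proof -
  have eq: "{Re \<mu> | \<mu>. eigenvalue X \<mu>} = Re ` spectrum X" by (auto simp: spectrum_def)
  show ?thesis unfolding eq using card_finite_spectrum(1)[OF X] spectrum_non_empty[OF X k] le
    by (auto simp: spectrum_def)
qed

lemma Max_Re_eigenvalues_eqI:
  fixes X :: "complex mat"
  assumes X: "X \<in> carrier_mat k k" and k: "k > 0" and le: "\<And>\<mu>. eigenvalue X \<mu> \<Longrightarrow> Re \<mu> \<le> B"
    and ev: "eigenvalue X (complex_of_real B)"
  shows "Max {Re \<mu> | \<mu>. eigenvalue X \<mu>} = B"
proof (rule antisym)
  show "Max {Re \<mu> | \<mu>. eigenvalue X \<mu>} \<le> B" by (rule Max_Re_eigenvalues_le[OF X k le])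
  have "finite {Re \<mu> | \<mu>. eigenvalue X \<mu>}"
    using card_finite_spectrum(1)[OF X] by (simp add: spectrum_def setcompr_eq_image)
  moreover have "B \<in> {Re \<mu> | \<mu>. eigenvalue X \<mu>}" using ev by force
  ultimately show "B \<le> Max {Re \<mu> | \<mu>. eigenvalue X \<mu>}" by simp
qed

section \<open>The incidence matrix of a spanning tree\<close>

lemma adj_in_sym: "adj_in F src tgt a b \<Longrightarrow> adj_in F src tgt b a"
  unfolding adj_in_def by auto

lemma adj_in_rtranclp_sym: "(adj_in F src tgt)\<^sup>*\<^sup>* a b \<Longrightarrow> (adj_in F src tgt)\<^sup>*\<^sup>* b a"
  by (induction rule: rtranclp_induct) (auto intro: converse_rtranclp_into_rtranclp adj_in_sym)

text \<open>Take for \<open>S\<close> the nodes reachable from \<open>src l\<close> without using \<open>l\<close>; by minimality of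
  the tree, \<open>tgt l\<close> is not among them.\<close>

lemma spanning_tree_cut:
  assumes tree: "spanning_tree n F src tgt" and l: "l \<in> F"
  obtains S where "src l \<in> S" "tgt l \<notin> S"
    "\<And>l'. l' \<in> F \<Longrightarrow> l' \<noteq> l \<Longrightarrow> src l' \<in> S \<longleftrightarrow> tgt l' \<in> S"
proof -
  let ?adj = "adj_in (F - {l}) src tgt"
  define S where "S = {i. ?adj\<^sup>*\<^sup>* (src l) i}"
  have "tgt l \<notin> S"
  proof
    assume "tgt l \<in> S"
    then have path: "?adj\<^sup>*\<^sup>* (src l) (tgt l)" unfolding S_def by simp
    have "?adj \<le> adj_in F src tgt" unfolding adj_in_def by auto
    moreover have "adj_in F src tgt \<le> ?adj\<^sup>*\<^sup>*"
    proof (intro predicate2I)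
      fix a b assume "adj_in F src tgt a b"
      then obtain l' where l': "l' \<in> F" "(src l' = a \<and> tgt l' = b) \<or> (src l' = b \<and> tgt l' = a)"
        unfolding adj_in_def by auto
      show "?adj\<^sup>*\<^sup>* a b"
      proof (cases "l' = l")
        case True
        then show ?thesis using l' path adj_in_rtranclp_sym[OF path] by auto
      next
        case False
        then have "?adj a b" using l' unfolding adj_in_def by auto
        then show ?thesis by simp
      qed
    qed
    ultimately have "(adj_in F src tgt)\<^sup>*\<^sup>* = ?adj\<^sup>*\<^sup>*" by (rule rtranclp_subset)
    then have "connected_on n (F - {l}) src tgt"
      using tree unfolding spanning_tree_def connected_on_def by simp
    then show False using tree l unfolding spanning_tree_def by blast
  qed
  moreover have "src l' \<in> S \<longleftrightarrow> tgt l' \<in> S" if "l' \<in> F" "l' \<noteq> l" for l'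
  proof -
    have "?adj (src l') (tgt l')" "?adj (tgt l') (src l')" using that unfolding adj_in_def by auto
    then show ?thesis unfolding S_def mem_Collect_eq by (meson rtranclp.rtrancl_into_rtrancl)
  qed
  ultimately show thesis using that[of S] unfolding S_def by blast
qed

locale tree_graph =
  fixes n m :: nat and src tgt :: "nat \<Rightarrow> nat"
  assumes n2: "n \<ge> 2"
    and graph: "simple_graph n m src tgt"
    and mge: "n - 1 \<le> m"
    and tree: "spanning_tree n {0..<n-1} src tgt"
begin

abbreviation "r \<equiv> n - 1"
abbreviation "D \<equiv> Dtau n m src tgt"

lemma r_pos: "r > 0" using n2 by auto

lemma D_carrier [simp]: "D \<in> carrier_mat n r"
  unfolding Dtau_def col_block_def inc_mat_def by auto

lemma D_dims [simp]: "dim_row D = n" "dim_col D = r"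
  using D_carrier by auto

lemma D_index:
  "i < n \<Longrightarrow> l < r \<Longrightarrow> D $$ (i,l) = (if i = src l then 1 else if i = tgt l then -1 else 0)"
  unfolding Dtau_def col_block_def inc_mat_def using mge by auto

lemma src_tgt: "l < m \<Longrightarrow> src l < n \<and> tgt l < n \<and> src l \<noteq> tgt l"
  using graph unfolding simple_graph_def by auto

lemma D_cut_column_sum:
  assumes "l < r" and S: "src l \<in> S" "tgt l \<notin> S"
    and cut: "\<And>l'. l' < r \<Longrightarrow> l' \<noteq> l \<Longrightarrow> src l' \<in> S \<longleftrightarrow> tgt l' \<in> S"
    and l': "l' < r"
  shows "(\<Sum>i \<in> S \<inter> {..<n}. D $$ (i,l')) = (if l' = l then 1 else 0)"
proof -
  have st: "src l' < n" "tgt l' < n" "src l' \<noteq> tgt l'" using src_tgt[of l'] l' mge by auto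
  have "(\<Sum>i \<in> S \<inter> {..<n}. D $$ (i,l'))
      = (\<Sum>i \<in> S \<inter> {..<n}. (if i = src l' then 1 else 0) - (if i = tgt l' then 1 else 0))"
    using st l' by (intro sum.cong refl) (auto simp: D_index)
  also have "\<dots> = (if src l' \<in> S then 1 else 0) - (if tgt l' \<in> S then 1 else 0)"
    using st by (simp add: sum_subtractf)
  also have "\<dots> = (if l' = l then 1 else 0)"
    using cut[of l'] S l' by auto
  finally show ?thesis .
qed

text \<open>Summing the rows of \<open>D x\<close> over the cut of a tree edge \<open>l\<close> isolates \<open>x\<^sub>l\<close>.\<close>

lemma D_injective:
  assumes x: "x \<in> carrier_vec r" and Dx: "cmat D *\<^sub>v x = 0\<^sub>v n"
  shows "x = 0\<^sub>v r"
proof (rule eq_vecI)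
  fix l assume "l < dim_vec (0\<^sub>v r)"
  then have l: "l < r" by simp
  obtain S where "src l \<in> S" "tgt l \<notin> S"
    and "\<And>l'. l' \<in> {0..<r} \<Longrightarrow> l' \<noteq> l \<Longrightarrow> src l' \<in> S \<longleftrightarrow> tgt l' \<in> S"
    using spanning_tree_cut[OF tree, of l] l by auto
  note col_sum = D_cut_column_sum[OF l this(1,2)] this(3)
  let ?T = "S \<inter> {..<n}"
  have "0 = (\<Sum>i\<in>?T. (cmat D *\<^sub>v x) $ i)" unfolding Dx by simp
  also have "\<dots> = (\<Sum>i\<in>?T. \<Sum>l'<r. complex_of_real (D $$ (i,l')) * x $ l')"
    using x by (intro sum.cong refl) (auto simp: mult_mat_vec_def scalar_prod_def lessThan_atLeast0)
  also have "\<dots> = (\<Sum>l'<r. x $ l' * complex_of_real (\<Sum>i\<in>?T. D $$ (i,l')))"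
    by (subst sum.swap) (simp add: sum_distrib_left mult.commute)
  also have "\<dots> = x $ l"
    using l by (simp add: col_sum if_distrib cong: if_cong)
  finally show "x $ l = 0\<^sub>v r $ l" using l by simp
qed (use x in auto)

end

section \<open>The edge Laplacian of the spanning tree\<close>

locale network = tree_graph +
  fixes w \<epsilon> :: "nat \<Rightarrow> real"
  assumes wpos: "\<forall>l<m. w l > 0" and epos: "\<forall>i<n. \<epsilon> i > 0"
begin

abbreviation "W \<equiv> mat_diag m w"
abbreviation "W_sqrt \<equiv> mat_diag m (\<lambda>l. sqrt (w l))"
abbreviation "E_inv \<equiv> mat_diag n (\<lambda>i. 1 / \<epsilon> i)"
abbreviation "E_inv_sqrt \<equiv> mat_diag n (\<lambda>i. 1 / sqrt (\<epsilon> i))"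
abbreviation "L \<equiv> Lest n m src tgt \<epsilon>"
abbreviation "T \<equiv> Ttc n m src tgt"
abbreviation "R \<equiv> Rmat n m src tgt"
abbreviation "A \<equiv> R * W * transpose_mat R"
abbreviation "M \<equiv> L * R * W * transpose_mat R"
abbreviation "cA \<equiv> cmat A"
abbreviation "cL \<equiv> cmat L"
abbreviation "cM \<equiv> cmat M"

lemma L_carrier [simp]: "L \<in> carrier_mat r r"
  unfolding Lest_def by auto

lemma L_dims [simp]: "dim_row L = r" "dim_col L = r"
  using L_carrier by auto

lemma L_pos_def: "pos_def cL"
  unfolding Lest_def using epos by (intro pos_def_transpose_diag_mult[OF D_carrier] D_injective) auto

lemma minv_Gram_D_carrier: "minv (transpose_mat D * D) \<in> carrier_mat r r"
proof -
  have DD: "transpose_mat D * D \<in> carrier_mat r r" by (rule carrier_matI) simp_all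
  have "pos_def (cmat (transpose_mat D * mat_diag n (\<lambda>_. 1) * D))"
    by (intro pos_def_transpose_diag_mult[OF D_carrier] D_injective) auto
  then have "pos_def (cmat (transpose_mat D * D))" by simp
  note inj = pos_def_injective[OF this cmat_carrier[OF DD]]
  show ?thesis by (rule minv_of_injective(1)[OF DD injective_of_cmat_injective[OF DD inj]])
qed

lemma T_carrier [simp]: "T \<in> carrier_mat r (m - r)"
proof -
  have "Dc n m src tgt \<in> carrier_mat n (m - r)"
    unfolding Dc_def col_block_def inc_mat_def by auto
  then show ?thesis
    unfolding Ttc_def by (intro mult_carrier_mat[OF mult_carrier_mat[OF minv_Gram_D_carrier]]) auto
qed

lemma R_carrier [simp]: "R \<in> carrier_mat r m"
  unfolding Rmat_def hcat_def using T_carrier mge by auto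

lemma R_dims [simp]: "dim_row R = r" "dim_col R = m"
  using R_carrier by auto

lemma R_index:
  "i < r \<Longrightarrow> l < m \<Longrightarrow> R $$ (i,l) = (if l < r then (if i = l then 1 else 0) else T $$ (i, l - r))"
  unfolding Rmat_def hcat_def using T_carrier mge by auto

lemma R_transpose_injective:
  assumes x: "x \<in> carrier_vec r" and Rx: "cmat (transpose_mat R) *\<^sub>v x = 0\<^sub>v m"
  shows "x = 0\<^sub>v r"
proof (rule eq_vecI)
  fix l assume "l < dim_vec (0\<^sub>v r)"
  then have l: "l < r" and lm: "l < m" using mge by auto
  have "0 = (cmat (transpose_mat R) *\<^sub>v x) $ l" using Rx lm by simp
  also have "\<dots> = (\<Sum>i<r. complex_of_real (R $$ (i,l)) * x $ i)"
    using x lm by (auto simp: mult_mat_vec_def scalar_prod_def lessThan_atLeast0 intro!: sum.cong)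
  also have "\<dots> = (\<Sum>i<r. (if i = l then x $ i else 0))"
    using lm l by (intro sum.cong refl) (auto simp: R_index)
  also have "\<dots> = x $ l" using l by simp
  finally show "x $ l = 0\<^sub>v r $ l" using l by simp
qed (use x in auto)

lemma A_carrier [simp]: "A \<in> carrier_mat r r" by auto

lemma A_pos_def: "pos_def cA"
proof -
  have "pos_def (cmat (transpose_mat (transpose_mat R) * W * transpose_mat R))"
    using wpos R_transpose_injective
    by (intro pos_def_transpose_diag_mult[OF transpose_carrier_mat[THEN iffD2, OF R_carrier]]) auto
  then show ?thesis by simp
qed

lemma L_sym: "transpose_mat L = L"
  unfolding Lest_def by (simp add: transpose_mult_dim assoc_mult_mat_dim)

lemma A_sym: "transpose_mat A = A"
  by (simp add: transpose_mult_dim assoc_mult_mat_dim)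

lemma M_eq: "M = L * A"
  by (simp add: assoc_mult_mat_dim)

lemma M_transpose: "transpose_mat M = A * L"
  unfolding M_eq by (simp add: transpose_mult_dim A_sym L_sym)

lemma cM_carrier [simp]: "cM \<in> carrier_mat r r" by (rule carrier_matI) simp_all

lemma cA_mult_vec:
  "dim_vec x = r \<Longrightarrow> cA *\<^sub>v x = cmat R *\<^sub>v (cmat W *\<^sub>v (cmat (transpose_mat R) *\<^sub>v x))"
  by (simp add: cmat_mult assoc_mult_mat_vec_dim)

lemma cM_mult_vec: "dim_vec x = r \<Longrightarrow> cM *\<^sub>v x = cL *\<^sub>v (cA *\<^sub>v x)"
  by (simp add: cmat_mult assoc_mult_mat_vec_dim)

lemma cM_transpose_mult_vec: "dim_vec x = r \<Longrightarrow> cmat (transpose_mat M) *\<^sub>v x = cA *\<^sub>v (cL *\<^sub>v x)"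
  unfolding M_transpose by (simp add: cmat_mult assoc_mult_mat_vec_dim)

lemma W_sqrt_square: "W_sqrt * W_sqrt = W"
  using wpos by (simp, intro mat_diag_cong) (auto simp: real_sqrt_mult[symmetric] less_imp_le)

lemma E_inv_sqrt_square: "E_inv_sqrt * E_inv_sqrt = E_inv"
  using epos by (simp, intro mat_diag_cong) (auto simp: real_sqrt_mult[symmetric])

lemma W_sqrt_mult_vec: "dim_vec x = m \<Longrightarrow> cmat W_sqrt *\<^sub>v (cmat W_sqrt *\<^sub>v x) = cmat W *\<^sub>v x"
  by (simp add: W_sqrt_square[symmetric] cmat_mult assoc_mult_mat_vec_dim del: mat_diag_diag)

lemma L_surjective:
  assumes x: "dim_vec x = r"
  obtains z where "dim_vec z = r" "cL *\<^sub>v z = x"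
proof
  have cL: "cL \<in> carrier_mat r r" by (rule cmat_carrier[OF L_carrier])
  note Linv = minv_of_injective[OF cL pos_def_injective[OF L_pos_def cL]]
  show "dim_vec (minv cL *\<^sub>v x) = r" using Linv(1) by auto
  show "cL *\<^sub>v (minv cL *\<^sub>v x) = x"
    using Linv x by (simp add: assoc_mult_mat_vec_dim[symmetric] one_mult_mat_vec_dim)
qed

lemma M_eigenvalue_pos:
  assumes "eigenvalue cM t"
  obtains \<tau> where "\<tau> > 0" "t = complex_of_real \<tau>"
proof -
  have "cM = cL * cA" unfolding M_eq by (rule cmat_mult) simp
  then show thesis
    using eigenvalue_mult_pos_def[OF cmat_carrier[OF L_carrier] cmat_carrier[OF A_carrier]
        L_pos_def A_pos_def] assms that by auto
qed

lemma M_injective: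
  assumes y: "y \<in> carrier_vec r" and My: "cM *\<^sub>v y = 0\<^sub>v r"
  shows "y = 0\<^sub>v r"
proof (rule ccontr)
  assume "y \<noteq> 0\<^sub>v r"
  then have "eigenvalue cM 0" using My y by (intro eigenvalueI_index[OF cM_carrier y]) auto
  then show False by (rule M_eigenvalue_pos) simp
qed

lemma spectrum_M_finite: "finite (spectrum cM)"
  using card_finite_spectrum(1)[OF cM_carrier] .

lemma spectrum_M_nonempty: "spectrum cM \<noteq> {}"
  using spectrum_non_empty[OF cM_carrier r_pos] .

end

section \<open>The \<open>H\<^sub>\<infinity>\<close> norm of \<open>\<Pi>\<^sub>\<tau>\<close>\<close>

lemma quadratic_ratio_le:
  fixes a b \<tau> \<omega> :: real
  assumes "a \<ge> 0" "b \<ge> 0" "\<tau> > 0" "\<omega> \<ge> 0"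
  shows "(b * \<tau>\<^sup>2 + a * \<tau>) / (\<tau>\<^sup>2 + \<omega>) \<le> a / \<tau> + b"
proof -
  have "(b * \<tau>\<^sup>2 + a * \<tau>) / (\<tau>\<^sup>2 + \<omega>) \<le> (b * \<tau>\<^sup>2 + a * \<tau>) / \<tau>\<^sup>2"
    using assms by (intro divide_left_mono) (auto intro!: mult_pos_pos add_pos_nonneg)
  also have "\<dots> = a / \<tau> + b" using assms by (simp add: field_simps power2_eq_square)
  finally show ?thesis .
qed

locale noisy_network = network +
  fixes \<sigma>\<^sub>w \<sigma>\<^sub>v :: real
begin

abbreviation "G \<equiv> hcat (\<sigma>\<^sub>w \<cdot>\<^sub>m (transpose_mat D * E_inv_sqrt)) ((- \<sigma>\<^sub>v) \<cdot>\<^sub>m (L * R * W_sqrt))"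
abbreviation "shift_M s \<equiv> s \<cdot>\<^sub>m 1\<^sub>m r + cM"
abbreviation "Pi_tau s \<equiv> cmat W_sqrt * (cmat (transpose_mat R) * minv (shift_M s) * cmat G)"
abbreviation "gain \<tau> \<equiv> \<sigma>\<^sub>w\<^sup>2 / \<tau> + \<sigma>\<^sub>v\<^sup>2"
abbreviation "peak \<equiv> Max ((\<lambda>t. gain (Re t)) ` spectrum cM)"

lemma gain_le_peak: "eigenvalue cM t \<Longrightarrow> gain (Re t) \<le> peak"
  using spectrum_M_finite by (intro Max_ge) (auto simp: spectrum_def)

lemma peak_attained:
  obtains t where "eigenvalue cM t" "peak = gain (Re t)"
proof -
  have "peak \<in> (\<lambda>t. gain (Re t)) ` spectrum cM"
    using spectrum_M_finite spectrum_M_nonempty by (intro Max_in) auto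
  then show thesis using that by (auto simp: spectrum_def)
qed

lemma peak_nonneg: "0 \<le> peak"
proof -
  obtain t where t: "eigenvalue cM t" "peak = gain (Re t)" by (rule peak_attained)
  obtain \<tau> where "\<tau> > 0" "t = complex_of_real \<tau>" using M_eigenvalue_pos[OF t(1)] .
  then show ?thesis using t(2) by simp
qed

lemma G_mult_transpose: "G * transpose_mat G = \<sigma>\<^sub>w\<^sup>2 \<cdot>\<^sub>m L + \<sigma>\<^sub>v\<^sup>2 \<cdot>\<^sub>m (L * A * L)"
proof -
  have "G * transpose_mat G
     = \<sigma>\<^sub>w\<^sup>2 \<cdot>\<^sub>m ((transpose_mat D * E_inv_sqrt) * transpose_mat (transpose_mat D * E_inv_sqrt))
       + \<sigma>\<^sub>v\<^sup>2 \<cdot>\<^sub>m ((L * R * W_sqrt) * transpose_mat (L * R * W_sqrt))"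
    by (subst hcat_mult_transpose) (auto simp: smult_mult_transpose)
  also have "(transpose_mat D * E_inv_sqrt) * transpose_mat (transpose_mat D * E_inv_sqrt)
           = transpose_mat D * (E_inv_sqrt * E_inv_sqrt) * D"
    by (simp add: transpose_mult_dim assoc_mult_mat_dim del: mat_diag_diag)
  also have "\<dots> = L" unfolding E_inv_sqrt_square Lest_def ..
  also have "(L * R * W_sqrt) * transpose_mat (L * R * W_sqrt)
           = L * R * (W_sqrt * W_sqrt) * transpose_mat R * transpose_mat L"
    by (simp add: transpose_mult_dim assoc_mult_mat_dim del: mat_diag_diag)
  also have "\<dots> = L * A * L" unfolding W_sqrt_square L_sym by (simp add: assoc_mult_mat_dim)
  finally show ?thesis .
qed

lemma G_mult_transpose_vec:
  assumes z: "dim_vec z = r"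
  shows "cmat G *\<^sub>v (cmat (transpose_mat G) *\<^sub>v z)
     = complex_of_real (\<sigma>\<^sub>w\<^sup>2) \<cdot>\<^sub>v (cL *\<^sub>v z) + complex_of_real (\<sigma>\<^sub>v\<^sup>2) \<cdot>\<^sub>v (cM *\<^sub>v (cL *\<^sub>v z))"
proof -
  have "cmat G *\<^sub>v (cmat (transpose_mat G) *\<^sub>v z) = cmat (G * transpose_mat G) *\<^sub>v z"
    using z by (simp add: cmat_mult assoc_mult_mat_vec_dim)
  also have "\<dots> = complex_of_real (\<sigma>\<^sub>w\<^sup>2) \<cdot>\<^sub>v (cL *\<^sub>v z) + complex_of_real (\<sigma>\<^sub>v\<^sup>2) \<cdot>\<^sub>v (cmat (L * A * L) *\<^sub>v z)"
    unfolding G_mult_transpose using z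
    by (simp add: cmat_add cmat_smult add_mult_distrib_mat_vec_dim smult_mat_mult_vec_dim del: of_real_power)
  also have "cmat (L * A * L) *\<^sub>v z = cM *\<^sub>v (cL *\<^sub>v z)"
    using z by (simp add: cmat_mult assoc_mult_mat_vec_dim)
  finally show ?thesis .
qed

lemma shift_M_mult_vec: "dim_vec y = r \<Longrightarrow> shift_M s *\<^sub>v y = s \<cdot>\<^sub>v y + cM *\<^sub>v y"
  by (simp add: add_mult_distrib_mat_vec_dim smult_mat_mult_vec_dim one_mult_mat_vec_dim)

lemma cadj_shift_M_mult_vec:
  "dim_vec z = r \<Longrightarrow> cadj (shift_M s) *\<^sub>v z = cnj s \<cdot>\<^sub>v z + cA *\<^sub>v (cL *\<^sub>v z)"
  by (simp add: cadj_add cadj_smult cadj_cmat add_mult_distrib_mat_vec_dim smult_mat_mult_vec_dim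
      one_mult_mat_vec_dim cM_transpose_mult_vec)

lemma shift_M_inverse:
  assumes s: "Re s = 0"
  shows "minv (shift_M s) \<in> carrier_mat r r" "shift_M s * minv (shift_M s) = 1\<^sub>m r"
    "minv (shift_M s) * shift_M s = 1\<^sub>m r"
proof -
  have inj: "y = 0\<^sub>v r" if y: "y \<in> carrier_vec r" and z: "shift_M s *\<^sub>v y = 0\<^sub>v r" for y
  proof (rule ccontr)
    assume y0: "y \<noteq> 0\<^sub>v r"
    have sy: "s \<cdot>\<^sub>v y + cM *\<^sub>v y = 0\<^sub>v r" using z unfolding shift_M_mult_vec[OF carrier_vecD[OF y]] .
    have "(cM *\<^sub>v y) $ i = (- s) * y $ i" if i: "i < r" for i
      using arg_cong[OF sy, of "\<lambda>x. x $ i"] i carrier_vecD[OF y]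
      by (simp add: eq_neg_iff_add_eq_0 add.commute)
    then have "eigenvalue cM (- s)" by (rule eigenvalueI_index[OF cM_carrier y y0])
    then obtain \<tau> where "\<tau> > 0" "- s = complex_of_real \<tau>" by (rule M_eigenvalue_pos)
    then show False using s by (simp add: complex_eq_iff)
  qed
  have "shift_M s \<in> carrier_mat r r" by (rule carrier_matI) simp_all
  from minv_of_injective[OF this inj]
  show "minv (shift_M s) \<in> carrier_mat r r" "shift_M s * minv (shift_M s) = 1\<^sub>m r"
    "minv (shift_M s) * shift_M s = 1\<^sub>m r" by auto
qed

lemma shift_M_inverse_mult_vec:
  assumes s: "Re s = 0" and y: "dim_vec y = r"
  shows "shift_M s *\<^sub>v (minv (shift_M s) *\<^sub>v y) = y"
    and "minv (shift_M s) *\<^sub>v (shift_M s *\<^sub>v y) = y"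
    and "cadj (shift_M s) *\<^sub>v (cadj (minv (shift_M s)) *\<^sub>v y) = y"
    and "cadj (minv (shift_M s)) *\<^sub>v (cadj (shift_M s) *\<^sub>v y) = y"
proof -
  note K = shift_M_inverse[OF s]
  have dK: "dim_row (minv (shift_M s)) = r" "dim_col (minv (shift_M s)) = r" using K(1) by auto
  have "cadj (shift_M s) * cadj (minv (shift_M s)) = 1\<^sub>m r"
    using K(3) dK by (subst cadj_mult[symmetric]) simp_all
  moreover have "cadj (minv (shift_M s)) * cadj (shift_M s) = 1\<^sub>m r"
    using K(2) dK by (subst cadj_mult[symmetric]) simp_all
  ultimately show "shift_M s *\<^sub>v (minv (shift_M s) *\<^sub>v y) = y"
    "minv (shift_M s) *\<^sub>v (shift_M s *\<^sub>v y) = y"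
    "cadj (shift_M s) *\<^sub>v (cadj (minv (shift_M s)) *\<^sub>v y) = y"
    "cadj (minv (shift_M s)) *\<^sub>v (cadj (shift_M s) *\<^sub>v y) = y"
    using K(2,3) dK y by (simp_all add: assoc_mult_mat_vec_dim[symmetric] one_mult_mat_vec_dim)
qed

lemma Pi_adj_Pi_mult_vec:
  assumes K: "minv (shift_M s) \<in> carrier_mat r r" and v: "dim_vec v = n + m"
  shows "(cadj (Pi_tau s) * Pi_tau s) *\<^sub>v v = cmat (transpose_mat G) *\<^sub>v
           (cadj (minv (shift_M s)) *\<^sub>v (cA *\<^sub>v (minv (shift_M s) *\<^sub>v (cmat G *\<^sub>v v))))"
proof -
  have d: "dim_row (minv (shift_M s)) = r" "dim_col (minv (shift_M s)) = r" using K by auto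
  then show ?thesis
    using v by (simp add: cadj_mult cadj_cmat assoc_mult_mat_vec_dim W_sqrt_mult_vec cA_mult_vec)
qed


lemma Pi_eigen_relations:
  assumes s: "Re s = 0" and ev: "eigenvector (cadj (Pi_tau s) * Pi_tau s) v \<mu>" and \<mu>: "\<mu> \<noteq> 0"
  obtains u y where "dim_vec u = r" "dim_vec y = r" "u \<noteq> 0\<^sub>v r"
    "cnj s \<cdot>\<^sub>v y + cM *\<^sub>v y = cM *\<^sub>v u"
    "complex_of_real (\<sigma>\<^sub>w\<^sup>2) \<cdot>\<^sub>v y + complex_of_real (\<sigma>\<^sub>v\<^sup>2) \<cdot>\<^sub>v (cM *\<^sub>v y) = \<mu> \<cdot>\<^sub>v (s \<cdot>\<^sub>v u + cM *\<^sub>v u)"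
proof -
  define K where "K = minv (shift_M s)"
  have dK: "dim_row K = r" "dim_col K = r" using shift_M_inverse(1)[OF s] unfolding K_def by auto
  have dv: "dim_vec v = n + m" and v0: "v \<noteq> 0\<^sub>v (n + m)"
    and evq: "(cadj (Pi_tau s) * Pi_tau s) *\<^sub>v v = \<mu> \<cdot>\<^sub>v v"
    using ev unfolding eigenvector_def by auto
  define u where "u = K *\<^sub>v (cmat G *\<^sub>v v)"
  define z where "z = cadj K *\<^sub>v (cA *\<^sub>v u)"
  define y where "y = cL *\<^sub>v z"
  have du: "dim_vec u = r" and dz: "dim_vec z = r" and dy: "dim_vec y = r"
    unfolding u_def z_def y_def using dK by auto
  have Gz: "cmat (transpose_mat G) *\<^sub>v z = \<mu> \<cdot>\<^sub>v v"
    using evq unfolding Pi_adj_Pi_mult_vec[OF shift_M_inverse(1)[OF s] dv] z_def u_def K_def .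
  have "cadj (shift_M s) *\<^sub>v z = cA *\<^sub>v u"
    unfolding z_def K_def using shift_M_inverse_mult_vec(3)[OF s, of "cA *\<^sub>v u"] du by simp
  then have "cL *\<^sub>v (cnj s \<cdot>\<^sub>v z + cA *\<^sub>v y) = cL *\<^sub>v (cA *\<^sub>v u)"
    unfolding cadj_shift_M_mult_vec[OF dz] y_def by simp
  then have E1: "cnj s \<cdot>\<^sub>v y + cM *\<^sub>v y = cM *\<^sub>v u"
    using dz dy du by (simp add: mult_add_distrib_mat_vec_dim mult_mat_vec_smult_dim cM_mult_vec y_def)
  have Gv: "shift_M s *\<^sub>v u = cmat G *\<^sub>v v"
    unfolding u_def K_def using shift_M_inverse_mult_vec(1)[OF s, of "cmat G *\<^sub>v v"] dv by simp
  have "cmat G *\<^sub>v (cmat (transpose_mat G) *\<^sub>v z) = \<mu> \<cdot>\<^sub>v (cmat G *\<^sub>v v)"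
    unfolding Gz using dv by (simp add: mult_mat_vec_smult_dim)
  then have E2: "complex_of_real (\<sigma>\<^sub>w\<^sup>2) \<cdot>\<^sub>v y + complex_of_real (\<sigma>\<^sub>v\<^sup>2) \<cdot>\<^sub>v (cM *\<^sub>v y)
      = \<mu> \<cdot>\<^sub>v (s \<cdot>\<^sub>v u + cM *\<^sub>v u)"
    unfolding G_mult_transpose_vec[OF dz] Gv[symmetric] shift_M_mult_vec[OF du] y_def .
  have "u \<noteq> 0\<^sub>v r"
  proof
    assume "u = 0\<^sub>v r"
    then have "\<mu> \<cdot>\<^sub>v v = 0\<^sub>v (n + m)" using Gz dK unfolding z_def by (simp add: mult_mat_zero_vec)
    then show False using smult_vec_eq_zero_imp[OF dv \<mu>] v0 by simp
  qed
  then show thesis using that du dy E1 E2 by blast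
qed

lemma Pi_eigenvalue_quadratic:
  assumes s: "Re s = 0" and ev: "eigenvector (cadj (Pi_tau s) * Pi_tau s) v \<mu>" and \<mu>: "\<mu> \<noteq> 0"
  shows "\<exists>t. eigenvalue cM t \<and>
    (complex_of_real (\<sigma>\<^sub>v\<^sup>2) - \<mu>) * t\<^sup>2 + complex_of_real (\<sigma>\<^sub>w\<^sup>2) * t + (- \<mu> * (s * cnj s)) = 0"
proof -
  obtain u y where u: "dim_vec u = r" "u \<noteq> 0\<^sub>v r" and y: "dim_vec y = r"
    and E1: "cnj s \<cdot>\<^sub>v y + cM *\<^sub>v y = cM *\<^sub>v u"
    and E2: "complex_of_real (\<sigma>\<^sub>w\<^sup>2) \<cdot>\<^sub>v y + complex_of_real (\<sigma>\<^sub>v\<^sup>2) \<cdot>\<^sub>v (cM *\<^sub>v y)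
      = \<mu> \<cdot>\<^sub>v (s \<cdot>\<^sub>v u + cM *\<^sub>v u)"
    using Pi_eigen_relations[OF s ev \<mu>] by blast
  have "cnj s = - s" using s by (simp add: complex_eq_iff)
  from quadratic_relation_of_resolvent[OF cM_carrier u(1) y this E1 E2]
  show ?thesis by (intro eigenvalue_of_quadratic_relation[OF cM_carrier _ u(2)]) (use u in \<open>auto intro: carrier_vecI\<close>)
qed

lemma Pi_eigenvalue_le_peak:
  assumes s: "Re s = 0" and ev: "eigenvalue (cadj (Pi_tau s) * Pi_tau s) \<mu>"
  shows "Re \<mu> \<le> peak"
proof (cases "\<mu> = 0")
  case True
  then show ?thesis using peak_nonneg by simp
next
  case False
  obtain v where "eigenvector (cadj (Pi_tau s) * Pi_tau s) v \<mu>" using ev unfolding eigenvalue_def ..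
  from Pi_eigenvalue_quadratic[OF s this False] obtain t where t: "eigenvalue cM t"
    and eq: "(complex_of_real (\<sigma>\<^sub>v\<^sup>2) - \<mu>) * t\<^sup>2 + complex_of_real (\<sigma>\<^sub>w\<^sup>2) * t + (- \<mu> * (s * cnj s)) = 0"
    by blast
  obtain \<tau> where \<tau>: "\<tau> > 0" "t = complex_of_real \<tau>" using M_eigenvalue_pos[OF t] .
  define \<omega> where "\<omega> = (cmod s)\<^sup>2"
  have "s * cnj s = complex_of_real \<omega>" unfolding \<omega>_def by (rule complex_norm_square[symmetric])
  then have eq': "\<mu> * complex_of_real (\<tau>\<^sup>2 + \<omega>) = complex_of_real (\<sigma>\<^sub>v\<^sup>2 * \<tau>\<^sup>2 + \<sigma>\<^sub>w\<^sup>2 * \<tau>)"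
    using eq unfolding \<tau>(2) by (simp add: algebra_simps)
  have "complex_of_real (\<tau>\<^sup>2 + \<omega>) \<noteq> 0"
    using \<tau>(1) unfolding \<omega>_def of_real_eq_0_iff by (simp add: add_pos_nonneg)
  then have "\<mu> = complex_of_real ((\<sigma>\<^sub>v\<^sup>2 * \<tau>\<^sup>2 + \<sigma>\<^sub>w\<^sup>2 * \<tau>) / (\<tau>\<^sup>2 + \<omega>))"
    unfolding of_real_divide by (subst nonzero_eq_divide_eq) (use eq' in auto)
  then have "Re \<mu> \<le> gain \<tau>"
    using quadratic_ratio_le[of "\<sigma>\<^sub>w\<^sup>2" "\<sigma>\<^sub>v\<^sup>2" \<tau> \<omega>] \<tau>(1) unfolding \<omega>_def by simp
  then show ?thesis using gain_le_peak[OF t] \<tau>(2) by simp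
qed


text \<open>At \<open>s = 0\<close> an eigenvector \<open>x\<close> of \<open>M\<close> for \<open>\<tau>\<close> yields the eigenvector \<open>G\<^sup>T L\<^sup>-\<^sup>1 x\<close> of
  \<open>\<Pi>\<^sub>\<tau>(0)\<^sup>H \<Pi>\<^sub>\<tau>(0)\<close> for \<open>\<sigma>\<^sub>w\<^sup>2/\<tau> + \<sigma>\<^sub>v\<^sup>2\<close>.\<close>

lemma Pi0_eigenvalue_gain:
  assumes x: "x \<in> carrier_vec r" "x \<noteq> 0\<^sub>v r" "cM *\<^sub>v x = complex_of_real \<tau> \<cdot>\<^sub>v x"
    and \<tau>: "\<tau> > 0" and g0: "gain \<tau> \<noteq> 0"
  shows "eigenvalue (cadj (Pi_tau 0) * Pi_tau 0) (complex_of_real (gain \<tau>))"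
proof -
  have re0: "Re (0::complex) = 0" by simp
  define K where "K = minv (shift_M 0)"
  have dK: "dim_row K = r" "dim_col K = r" using shift_M_inverse(1)[OF re0] unfolding K_def by auto
  have dx: "dim_vec x = r" using x by auto
  obtain z where dz: "dim_vec z = r" and Lz: "cL *\<^sub>v z = x" using L_surjective[OF dx] .
  define g where "g = complex_of_real (gain \<tau>)"
  define v where "v = cmat (transpose_mat G) *\<^sub>v z"
  have dv: "dim_vec v = n + m" unfolding v_def by simp
  have "cmat G *\<^sub>v v = complex_of_real (\<sigma>\<^sub>w\<^sup>2) \<cdot>\<^sub>v x + complex_of_real (\<sigma>\<^sub>v\<^sup>2) \<cdot>\<^sub>v (complex_of_real \<tau> \<cdot>\<^sub>v x)"
    unfolding v_def G_mult_transpose_vec[OF dz] Lz x(3) ..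
  also have "\<dots> = (g * complex_of_real \<tau>) \<cdot>\<^sub>v x"
    unfolding g_def using dx \<tau> by (intro eq_vecI_dim) (auto simp: field_simps)
  finally have Gv: "cmat G *\<^sub>v v = (g * complex_of_real \<tau>) \<cdot>\<^sub>v x" .
  also have "\<dots> = shift_M 0 *\<^sub>v (g \<cdot>\<^sub>v x)"
    using dx x(3) by (subst shift_M_mult_vec) (auto intro!: eq_vecI_dim simp: mult_mat_vec_smult_dim)
  finally have KGv: "K *\<^sub>v (cmat G *\<^sub>v v) = g \<cdot>\<^sub>v x"
    unfolding K_def using shift_M_inverse_mult_vec(2)[OF re0, of "g \<cdot>\<^sub>v x"] dx by simp
  have "cA *\<^sub>v x = cadj (shift_M 0) *\<^sub>v z"
    unfolding cadj_shift_M_mult_vec[OF dz] Lz using dz dx by (intro eq_vecI_dim[of _ r]) auto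
  then have Kz: "cadj K *\<^sub>v (cA *\<^sub>v x) = z"
    unfolding K_def using shift_M_inverse_mult_vec(4)[OF re0, of z] dz by simp
  have "(cadj (Pi_tau 0) * Pi_tau 0) *\<^sub>v v
      = cmat (transpose_mat G) *\<^sub>v (cadj K *\<^sub>v (cA *\<^sub>v (K *\<^sub>v (cmat G *\<^sub>v v))))"
    unfolding K_def by (rule Pi_adj_Pi_mult_vec[OF shift_M_inverse(1)[OF re0] dv])
  also have "\<dots> = cmat (transpose_mat G) *\<^sub>v (cadj K *\<^sub>v (cA *\<^sub>v (g \<cdot>\<^sub>v x)))"
    unfolding KGv ..
  also have "\<dots> = g \<cdot>\<^sub>v v"
    unfolding v_def Kz[symmetric] using dx dK by (simp add: mult_mat_vec_smult_dim)
  finally have eq: "(cadj (Pi_tau 0) * Pi_tau 0) *\<^sub>v v = g \<cdot>\<^sub>v v" .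
  have g\<tau>: "g * complex_of_real \<tau> \<noteq> 0"
    using g0 \<tau> by (simp only: g_def mult_eq_0_iff of_real_eq_0_iff) auto
  have "v \<noteq> 0\<^sub>v (n + m)"
  proof
    assume "v = 0\<^sub>v (n + m)"
    then have "(g * complex_of_real \<tau>) \<cdot>\<^sub>v x = 0\<^sub>v r" using Gv by (simp add: mult_mat_zero_vec)
    then show False using smult_vec_eq_zero_imp[OF dx g\<tau>] x(2) by simp
  qed
  then show ?thesis
    using eq dv unfolding eigenvalue_def eigenvector_def g_def by (auto intro!: carrier_vecI)
qed

lemma Pi0_eigenvalue_noiseless:
  assumes "\<sigma>\<^sub>w = 0" "\<sigma>\<^sub>v = 0"
  shows "eigenvalue (cadj (Pi_tau 0) * Pi_tau 0) 0"
proof -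
  have re0: "Re (0::complex) = 0" by simp
  define e where "e = (unit_vec (n + m) 0 :: complex vec)"
  have de: "dim_vec e = n + m" unfolding e_def by simp
  have "e \<noteq> 0\<^sub>v (n + m)"
  proof
    assume "e = 0\<^sub>v (n + m)"
    then have "e $ 0 = 0" using n2 by simp
    then show False unfolding e_def using n2 by simp
  qed
  moreover have "cmat G *\<^sub>v e = 0\<^sub>v r"
    using assms de by (intro eq_vecI) (auto simp: scalar_prod_def hcat_def cmat_def intro!: sum.neutral)
  then have "(cadj (Pi_tau 0) * Pi_tau 0) *\<^sub>v e = 0\<^sub>v (n + m)"
    unfolding Pi_adj_Pi_mult_vec[OF shift_M_inverse(1)[OF re0] de] using shift_M_inverse(1)[OF re0]
    by (auto simp: mult_mat_zero_vec)
  ultimately show ?thesis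
    using de unfolding eigenvalue_def eigenvector_def by (auto intro!: exI[of _ e] carrier_vecI)
qed

lemma Pi0_eigenvalue_peak: "eigenvalue (cadj (Pi_tau 0) * Pi_tau 0) (complex_of_real peak)"
proof -
  obtain t where t: "eigenvalue cM t" "peak = gain (Re t)" by (rule peak_attained)
  obtain \<tau> where \<tau>: "\<tau> > 0" "t = complex_of_real \<tau>" using M_eigenvalue_pos[OF t(1)] .
  show ?thesis
  proof (cases "peak = 0")
    case True
    then have "\<sigma>\<^sub>w\<^sup>2 / \<tau> + \<sigma>\<^sub>v\<^sup>2 = 0" using t(2) \<tau>(2) by simp
    moreover have "0 \<le> \<sigma>\<^sub>w\<^sup>2 / \<tau>" using \<tau>(1) by simp
    ultimately have "\<sigma>\<^sub>w = 0" "\<sigma>\<^sub>v = 0" using \<tau>(1) by (auto simp: add_nonneg_eq_0_iff)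
    then show ?thesis using Pi0_eigenvalue_noiseless True by simp
  next
    case False
    obtain x where "x \<in> carrier_vec r" "x \<noteq> 0\<^sub>v r" "cM *\<^sub>v x = complex_of_real \<tau> \<cdot>\<^sub>v x"
      using t(1) \<tau>(2) unfolding eigenvalue_def eigenvector_def by auto
    from Pi0_eigenvalue_gain[OF this \<tau>(1)] show ?thesis using False t(2) \<tau>(2) by simp
  qed
qed

lemma hinf_norm_Pi: "hinf_norm (\<lambda>s. Pi_tau s) = sqrt peak"
proof -
  have nm: "n + m > 0" using n2 by simp
  have carrier: "cadj (Pi_tau s) * Pi_tau s \<in> carrier_mat (n + m) (n + m)" for s
    by (rule carrier_matI) simp_all
  have le: "sigma_max (Pi_tau (\<i> * complex_of_real \<omega>)) \<le> sqrt peak" for \<omega>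
    unfolding sigma_max_def
    by (intro real_sqrt_le_mono Max_Re_eigenvalues_le[OF carrier nm] Pi_eigenvalue_le_peak) auto
  have eq: "sigma_max (Pi_tau (\<i> * complex_of_real 0)) = sqrt peak"
    unfolding sigma_max_def of_real_0 mult_zero_right
    by (subst Max_Re_eigenvalues_eqI[OF carrier nm Pi_eigenvalue_le_peak Pi0_eigenvalue_peak]) auto
  show ?thesis unfolding hinf_norm_def
    by (rule cSup_eq_maximum) (use le eq in \<open>auto intro!: image_eqI[of _ _ 0]\<close>)
qed


section \<open>The largest singular value of \<open>\<sigma>\<^sub>w\<^sup>2 X + \<sigma>\<^sub>v\<^sup>2 Y\<close>\<close>

abbreviation "ALA \<equiv> R * W * transpose_mat R * L * R * W * transpose_mat R"
abbreviation "X \<equiv> W_sqrt * transpose_mat R * minv ALA * R * W_sqrt"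
abbreviation "Y \<equiv> W_sqrt * transpose_mat R * minv A * R * W_sqrt"
abbreviation "S \<equiv> \<sigma>\<^sub>w\<^sup>2 \<cdot>\<^sub>m X + \<sigma>\<^sub>v\<^sup>2 \<cdot>\<^sub>m Y"

lemma ALA_carrier: "ALA \<in> carrier_mat r r" by (rule carrier_matI) simp_all

lemma ALA_mult_vec: "dim_vec y = r \<Longrightarrow> cmat ALA *\<^sub>v y = cA *\<^sub>v (cM *\<^sub>v y)"
  by (simp add: cmat_mult assoc_mult_mat_vec_dim)

lemma A_injective: "y \<in> carrier_vec r \<Longrightarrow> cA *\<^sub>v y = 0\<^sub>v r \<Longrightarrow> y = 0\<^sub>v r"
  by (rule pos_def_injective[OF A_pos_def cmat_carrier[OF A_carrier]])

lemma A_inverse: "minv A \<in> carrier_mat r r" "A * minv A = 1\<^sub>m r" "minv A * A = 1\<^sub>m r"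
  using minv_of_injective[OF A_carrier injective_of_cmat_injective[OF A_carrier A_injective]] by auto

lemma ALA_inverse: "minv ALA \<in> carrier_mat r r" "ALA * minv ALA = 1\<^sub>m r" "minv ALA * ALA = 1\<^sub>m r"
proof -
  have "y = 0\<^sub>v r" if y: "y \<in> carrier_vec r" and z: "cmat ALA *\<^sub>v y = 0\<^sub>v r" for y
  proof -
    have "cA *\<^sub>v (cM *\<^sub>v y) = 0\<^sub>v r" using z ALA_mult_vec[of y] y by simp
    then have "cM *\<^sub>v y = 0\<^sub>v r" by (rule A_injective[rotated]) (rule carrier_vecI, simp)
    then show ?thesis by (rule M_injective[OF y])
  qed
  from minv_of_injective[OF ALA_carrier injective_of_cmat_injective[OF ALA_carrier this]]
  show "minv ALA \<in> carrier_mat r r" "ALA * minv ALA = 1\<^sub>m r" "minv ALA * ALA = 1\<^sub>m r" by auto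
qed

lemma minv_dims [simp]:
  "dim_row (minv A) = r" "dim_col (minv A) = r" "dim_row (minv ALA) = r" "dim_col (minv ALA) = r"
  using A_inverse(1) ALA_inverse(1) by auto

lemma A_inv_mult_vec_A: "dim_vec x = r \<Longrightarrow> cmat (minv A) *\<^sub>v (cA *\<^sub>v x) = x"
  by (simp add: cmat_mult[symmetric] assoc_mult_mat_vec_dim[symmetric] A_inverse(3) cmat_one
      one_mult_mat_vec_dim del: A_carrier)

lemma M_ALA_inv_mult_vec_A: "dim_vec x = r \<Longrightarrow> cM *\<^sub>v (cmat (minv ALA) *\<^sub>v (cA *\<^sub>v x)) = x"
proof -
  assume x: "dim_vec x = r"
  have "cmat ALA *\<^sub>v (cmat (minv ALA) *\<^sub>v (cA *\<^sub>v x)) = cmat (ALA * minv ALA) *\<^sub>v (cA *\<^sub>v x)"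
    using x by (subst cmat_mult) (simp_all add: assoc_mult_mat_vec_dim)
  then have e: "cA *\<^sub>v (cM *\<^sub>v (cmat (minv ALA) *\<^sub>v (cA *\<^sub>v x))) = cA *\<^sub>v x"
    unfolding ALA_inverse(2) cmat_one using x by (simp add: ALA_mult_vec one_mult_mat_vec_dim)
  show ?thesis
    by (rule mult_mat_vec_cancel[OF A_injective cmat_carrier[OF A_carrier] _ _ e]) (use x in simp_all)
qed

abbreviation "Q_vec p \<equiv> complex_of_real (\<sigma>\<^sub>w\<^sup>2) \<cdot>\<^sub>v (cmat (minv ALA) *\<^sub>v p)
                       + complex_of_real (\<sigma>\<^sub>v\<^sup>2) \<cdot>\<^sub>v (cmat (minv A) *\<^sub>v p)"

lemma S_mult_vec: "dim_vec v = m \<Longrightarrow>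
  cmat S *\<^sub>v v = cmat W_sqrt *\<^sub>v (cmat (transpose_mat R) *\<^sub>v Q_vec (cmat R *\<^sub>v (cmat W_sqrt *\<^sub>v v)))"
  by (simp add: cmat_add cmat_smult cmat_mult add_mult_distrib_mat_vec_dim smult_mat_mult_vec_dim
      assoc_mult_mat_vec_dim mult_add_distrib_mat_vec_dim mult_mat_vec_smult_dim del: of_real_power)

lemma M_Q_vec_A: "dim_vec x = r \<Longrightarrow>
  cM *\<^sub>v Q_vec (cA *\<^sub>v x) = complex_of_real (\<sigma>\<^sub>w\<^sup>2) \<cdot>\<^sub>v x + complex_of_real (\<sigma>\<^sub>v\<^sup>2) \<cdot>\<^sub>v (cM *\<^sub>v x)"
  by (simp add: A_inv_mult_vec_A M_ALA_inv_mult_vec_A mult_add_distrib_mat_vec_dim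
      mult_mat_vec_smult_dim del: of_real_power)

lemma Q_vec_smult: "dim_vec p = r \<Longrightarrow> Q_vec (c \<cdot>\<^sub>v p) = c \<cdot>\<^sub>v Q_vec p"
  by (intro eq_vecI_dim[of _ r]) (auto simp: mult_mat_vec_smult_dim algebra_simps)

lemma R_W_R_mult_vec:
  "dim_vec x = r \<Longrightarrow> cmat R *\<^sub>v (cmat W_sqrt *\<^sub>v (cmat W_sqrt *\<^sub>v (cmat (transpose_mat R) *\<^sub>v x))) = cA *\<^sub>v x"
  by (simp add: W_sqrt_mult_vec cA_mult_vec)

lemma S_sym: "transpose_mat S = S"
proof -
  have sym: "transpose_mat (W_sqrt * transpose_mat R * K * R * W_sqrt) = W_sqrt * transpose_mat R * K * R * W_sqrt"
    if "K \<in> carrier_mat r r" "transpose_mat K = K" for K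
    using that by (simp add: transpose_mult_dim assoc_mult_mat_dim)
  have "transpose_mat ALA = ALA"
    by (simp add: transpose_mult_dim assoc_mult_mat_dim L_sym)
  then have "transpose_mat X = X"
    by (intro sym ALA_inverse(1) transpose_minv_sym[OF ALA_carrier _ ALA_inverse(1,2)])
  moreover have "transpose_mat Y = Y"
    by (intro sym A_inverse(1) transpose_minv_sym[OF A_carrier A_sym A_inverse(1,2)])
  moreover have "transpose_mat S = \<sigma>\<^sub>w\<^sup>2 \<cdot>\<^sub>m transpose_mat X + \<sigma>\<^sub>v\<^sup>2 \<cdot>\<^sub>m transpose_mat Y"
    by (rule transpose_smult_add) simp_all
  ultimately show ?thesis by simp
qed

lemma S_adj_S_mult_vec: "dim_vec v = m \<Longrightarrow> (cadj (cmat S) * cmat S) *\<^sub>v v = cmat S *\<^sub>v (cmat S *\<^sub>v v)"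
  unfolding cadj_cmat S_sym by (simp add: assoc_mult_mat_vec_dim)


lemma S_eigen_relations:
  assumes ev: "eigenvector (cadj (cmat S) * cmat S) v \<mu>" and \<mu>: "\<mu> \<noteq> 0"
  obtains a b where "dim_vec a = r" "a \<noteq> 0\<^sub>v r" "dim_vec b = r"
    "cM *\<^sub>v b = complex_of_real (\<sigma>\<^sub>w\<^sup>2) \<cdot>\<^sub>v a + complex_of_real (\<sigma>\<^sub>v\<^sup>2) \<cdot>\<^sub>v (cM *\<^sub>v a)"
    "complex_of_real (\<sigma>\<^sub>w\<^sup>2) \<cdot>\<^sub>v b + complex_of_real (\<sigma>\<^sub>v\<^sup>2) \<cdot>\<^sub>v (cM *\<^sub>v b) = \<mu> \<cdot>\<^sub>v (cM *\<^sub>v a)"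
proof -
  have dv: "dim_vec v = m" and v0: "v \<noteq> 0\<^sub>v m" and evq: "cmat S *\<^sub>v (cmat S *\<^sub>v v) = \<mu> \<cdot>\<^sub>v v"
    using ev S_adj_S_mult_vec unfolding eigenvector_def by auto
  define p where "p = cmat R *\<^sub>v (cmat W_sqrt *\<^sub>v v)"
  define a where "a = Q_vec p"
  define b where "b = Q_vec (cA *\<^sub>v a)"
  have dp: "dim_vec p = r" and da: "dim_vec a = r" and db: "dim_vec b = r"
    unfolding p_def a_def b_def by simp_all
  have Sv: "cmat S *\<^sub>v v = cmat W_sqrt *\<^sub>v (cmat (transpose_mat R) *\<^sub>v a)"
    unfolding a_def p_def by (rule S_mult_vec[OF dv])
  have "cmat S *\<^sub>v (cmat S *\<^sub>v v) = cmat W_sqrt *\<^sub>v (cmat (transpose_mat R) *\<^sub>v b)"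
    unfolding Sv b_def by (subst S_mult_vec) (simp_all add: R_W_R_mult_vec da)
  then have "cmat R *\<^sub>v (cmat W_sqrt *\<^sub>v (cmat W_sqrt *\<^sub>v (cmat (transpose_mat R) *\<^sub>v b)))
      = cmat R *\<^sub>v (cmat W_sqrt *\<^sub>v (\<mu> \<cdot>\<^sub>v v))"
    using evq by simp
  then have "cA *\<^sub>v b = \<mu> \<cdot>\<^sub>v p"
    unfolding R_W_R_mult_vec[OF db] p_def using dv by (simp add: mult_mat_vec_smult_dim)
  then have QAb: "Q_vec (cA *\<^sub>v b) = \<mu> \<cdot>\<^sub>v a" unfolding a_def by (simp only: Q_vec_smult[OF dp])
  have e1: "cM *\<^sub>v b = complex_of_real (\<sigma>\<^sub>w\<^sup>2) \<cdot>\<^sub>v a + complex_of_real (\<sigma>\<^sub>v\<^sup>2) \<cdot>\<^sub>v (cM *\<^sub>v a)"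
    unfolding b_def by (rule M_Q_vec_A[OF da])
  have e2: "complex_of_real (\<sigma>\<^sub>w\<^sup>2) \<cdot>\<^sub>v b + complex_of_real (\<sigma>\<^sub>v\<^sup>2) \<cdot>\<^sub>v (cM *\<^sub>v b) = \<mu> \<cdot>\<^sub>v (cM *\<^sub>v a)"
    using M_Q_vec_A[OF db] unfolding QAb using da by (simp add: mult_mat_vec_smult_dim)
  have "a \<noteq> 0\<^sub>v r"
  proof
    assume "a = 0\<^sub>v r"
    then have "\<mu> \<cdot>\<^sub>v v = 0\<^sub>v m" using evq Sv by (simp add: mult_mat_zero_vec)
    then show False using smult_vec_eq_zero_imp[OF dv \<mu>] v0 by simp
  qed
  then show thesis using that da db e1 e2 by blast
qed

lemma S_eigenvalue_quadratic:
  assumes ev: "eigenvector (cadj (cmat S) * cmat S) v \<mu>" and \<mu>: "\<mu> \<noteq> 0"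
  shows "\<exists>t. eigenvalue cM t \<and>
    (complex_of_real (\<sigma>\<^sub>v\<^sup>2) * complex_of_real (\<sigma>\<^sub>v\<^sup>2) - \<mu>) * t\<^sup>2
    + (2 * complex_of_real (\<sigma>\<^sub>w\<^sup>2) * complex_of_real (\<sigma>\<^sub>v\<^sup>2)) * t
    + complex_of_real (\<sigma>\<^sub>w\<^sup>2) * complex_of_real (\<sigma>\<^sub>w\<^sup>2) = 0"
proof -
  obtain a b where a: "dim_vec a = r" "a \<noteq> 0\<^sub>v r" and b: "dim_vec b = r"
    and e1: "cM *\<^sub>v b = complex_of_real (\<sigma>\<^sub>w\<^sup>2) \<cdot>\<^sub>v a + complex_of_real (\<sigma>\<^sub>v\<^sup>2) \<cdot>\<^sub>v (cM *\<^sub>v a)"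
    and e2: "complex_of_real (\<sigma>\<^sub>w\<^sup>2) \<cdot>\<^sub>v b + complex_of_real (\<sigma>\<^sub>v\<^sup>2) \<cdot>\<^sub>v (cM *\<^sub>v b) = \<mu> \<cdot>\<^sub>v (cM *\<^sub>v a)"
    using S_eigen_relations[OF ev \<mu>] by blast
  from quadratic_relation_of_square[OF cM_carrier a(1) b e1 e2]
  show ?thesis by (intro eigenvalue_of_quadratic_relation[OF cM_carrier _ a(2)]) (use a in \<open>auto intro: carrier_vecI\<close>)
qed

lemma S_eigenvalue_le_peak_sq:
  assumes ev: "eigenvalue (cadj (cmat S) * cmat S) \<mu>"
  shows "Re \<mu> \<le> peak\<^sup>2"
proof (cases "\<mu> = 0")
  case True
  then show ?thesis by simp
next
  case False
  obtain v where "eigenvector (cadj (cmat S) * cmat S) v \<mu>" using ev unfolding eigenvalue_def ..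
  from S_eigenvalue_quadratic[OF this False] obtain t where t: "eigenvalue cM t"
    and eq: "(complex_of_real (\<sigma>\<^sub>v\<^sup>2) * complex_of_real (\<sigma>\<^sub>v\<^sup>2) - \<mu>) * t\<^sup>2
      + (2 * complex_of_real (\<sigma>\<^sub>w\<^sup>2) * complex_of_real (\<sigma>\<^sub>v\<^sup>2)) * t
      + complex_of_real (\<sigma>\<^sub>w\<^sup>2) * complex_of_real (\<sigma>\<^sub>w\<^sup>2) = 0"
    by blast
  obtain \<tau> where \<tau>: "\<tau> > 0" "t = complex_of_real \<tau>" using M_eigenvalue_pos[OF t] .
  have "\<mu> * complex_of_real (\<tau>\<^sup>2) = complex_of_real ((\<sigma>\<^sub>v\<^sup>2 * \<tau> + \<sigma>\<^sub>w\<^sup>2)\<^sup>2)"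
    using eq unfolding \<tau>(2) by (simp add: algebra_simps power2_eq_square)
  moreover have "complex_of_real (\<tau>\<^sup>2) \<noteq> 0" using \<tau>(1) by simp
  ultimately have "\<mu> = complex_of_real ((\<sigma>\<^sub>v\<^sup>2 * \<tau> + \<sigma>\<^sub>w\<^sup>2)\<^sup>2 / \<tau>\<^sup>2)"
    unfolding of_real_divide by (subst nonzero_eq_divide_eq) auto
  also have "(\<sigma>\<^sub>v\<^sup>2 * \<tau> + \<sigma>\<^sub>w\<^sup>2)\<^sup>2 / \<tau>\<^sup>2 = (gain \<tau>)\<^sup>2"
    using \<tau>(1) by (simp add: field_simps power2_eq_square)
  finally have "Re \<mu> = (gain \<tau>)\<^sup>2" by simp
  also have "\<dots> \<le> peak\<^sup>2"
    using gain_le_peak[OF t] \<tau> by (intro power_mono) auto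
  finally show ?thesis .
qed

lemma Q_vec_A_eigenvector:
  assumes x: "dim_vec x = r" "cM *\<^sub>v x = complex_of_real \<tau> \<cdot>\<^sub>v x" and \<tau>: "\<tau> > 0"
  shows "Q_vec (cA *\<^sub>v x) = complex_of_real (gain \<tau>) \<cdot>\<^sub>v x"
proof -
  have "cM *\<^sub>v Q_vec (cA *\<^sub>v x)
      = complex_of_real (\<sigma>\<^sub>w\<^sup>2) \<cdot>\<^sub>v x + complex_of_real (\<sigma>\<^sub>v\<^sup>2) \<cdot>\<^sub>v (complex_of_real \<tau> \<cdot>\<^sub>v x)"
    unfolding M_Q_vec_A[OF x(1)] x(2) ..
  also have "\<dots> = cM *\<^sub>v (complex_of_real (gain \<tau>) \<cdot>\<^sub>v x)"
    unfolding mult_mat_vec_smult_dim[of cM x, OF cM_carrier[THEN carrier_matD(2), folded x(1)]] x(2)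
    using x(1) \<tau> by (intro eq_vecI_dim[of _ r]) (auto simp: field_simps)
  finally have e: "cM *\<^sub>v Q_vec (cA *\<^sub>v x) = cM *\<^sub>v (complex_of_real (gain \<tau>) \<cdot>\<^sub>v x)" .
  show ?thesis
    by (rule mult_mat_vec_cancel[OF M_injective cM_carrier _ _ e]) (use x(1) in simp_all)
qed

lemma S_eigenvalue_peak_sq: "eigenvalue (cadj (cmat S) * cmat S) (complex_of_real (peak\<^sup>2))"
proof -
  obtain t where t: "eigenvalue cM t" "peak = gain (Re t)" by (rule peak_attained)
  obtain \<tau> where \<tau>: "\<tau> > 0" "t = complex_of_real \<tau>" using M_eigenvalue_pos[OF t(1)] .
  obtain x where x: "x \<in> carrier_vec r" "x \<noteq> 0\<^sub>v r" "cM *\<^sub>v x = complex_of_real \<tau> \<cdot>\<^sub>v x"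
    using t(1) \<tau>(2) unfolding eigenvalue_def eigenvector_def by auto
  have dx: "dim_vec x = r" using x by auto
  define g where "g = complex_of_real peak"
  have QAx: "Q_vec (cA *\<^sub>v x) = g \<cdot>\<^sub>v x"
    unfolding g_def t(2) \<tau>(2) using Q_vec_A_eigenvector[OF dx x(3) \<tau>(1)] by simp
  define v where "v = cmat W_sqrt *\<^sub>v (cmat (transpose_mat R) *\<^sub>v x)"
  have dv: "dim_vec v = m" unfolding v_def by simp
  have Sv: "cmat S *\<^sub>v v = g \<cdot>\<^sub>v v"
    unfolding S_mult_vec[OF dv] unfolding v_def R_W_R_mult_vec[OF dx] QAx
    using dx by (simp add: mult_mat_vec_smult_dim)
  have "(cadj (cmat S) * cmat S) *\<^sub>v v = g \<cdot>\<^sub>v (g \<cdot>\<^sub>v v)"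
    unfolding S_adj_S_mult_vec[OF dv] Sv using dv by (simp add: mult_mat_vec_smult_dim Sv)
  also have "\<dots> = complex_of_real (peak\<^sup>2) \<cdot>\<^sub>v v"
    unfolding g_def using dv by (intro eq_vecI_dim) (auto simp: power2_eq_square)
  finally have eq: "(cadj (cmat S) * cmat S) *\<^sub>v v = complex_of_real (peak\<^sup>2) \<cdot>\<^sub>v v" .
  have "v \<noteq> 0\<^sub>v m"
  proof
    assume "v = 0\<^sub>v m"
    then have "cmat R *\<^sub>v (cmat W_sqrt *\<^sub>v v) = 0\<^sub>v r" by (simp add: mult_mat_zero_vec)
    then have "cA *\<^sub>v x = 0\<^sub>v r" unfolding v_def R_W_R_mult_vec[OF dx] .
    then show False using A_injective[OF x(1)] x(2) by simp
  qed
  then show ?thesis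
    using eq dv unfolding eigenvalue_def eigenvector_def by (auto intro!: carrier_vecI)
qed

lemma sigma_max_S: "sigma_max (cmat S) = peak"
proof -
  have "cadj (cmat S) * cmat S \<in> carrier_mat m m" by (rule carrier_matI) simp_all
  moreover have "m > 0" using mge n2 by simp
  ultimately show ?thesis unfolding sigma_max_def
    by (subst Max_Re_eigenvalues_eqI[OF _ _ S_eigenvalue_le_peak_sq S_eigenvalue_peak_sq])
      (simp_all add: peak_nonneg)
qed

end

theorem lemma6:
  fixes n m :: nat and src tgt :: "nat \<Rightarrow> nat"
    and w :: "nat \<Rightarrow> real" and \<epsilon> :: "nat \<Rightarrow> real" and \<sigma>\<^sub>w \<sigma>\<^sub>v :: real
  assumes n2: "n \<ge> 2"
    and graph: "simple_graph n m src tgt"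
    and conn: "connected_on n {0..<m} src tgt"
    and mge: "n - 1 \<le> m"
    and tree: "spanning_tree n {0..<n-1} src tgt"
    and wpos: "\<forall>l<m. w l > 0"
    and epos: "\<forall>i<n. \<epsilon> i > 0"
  shows "(hinf_norm (\<lambda>s::complex.
            cmat (mat_diag m (\<lambda>l. sqrt (w l))) *
            (cmat (transpose_mat (Rmat n m src tgt)) *
             minv (s \<cdot>\<^sub>m 1\<^sub>m (n-1) + cmat (Lest n m src tgt \<epsilon> * Rmat n m src tgt * mat_diag m w
                                          * transpose_mat (Rmat n m src tgt))) *
             cmat (hcat (\<sigma>\<^sub>w \<cdot>\<^sub>m (transpose_mat (Dtau n m src tgt) * mat_diag n (\<lambda>i. 1 / sqrt (\<epsilon> i))))
                        ((- \<sigma>\<^sub>v) \<cdot>\<^sub>m (Lest n m src tgt \<epsilon> * Rmat n m src tgt * mat_diag m (\<lambda>l. sqrt (w l))))))))\<^sup>2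
         = sigma_max (cmat (
             \<sigma>\<^sub>w\<^sup>2 \<cdot>\<^sub>m (mat_diag m (\<lambda>l. sqrt (w l)) * transpose_mat (Rmat n m src tgt) *
                  minv (Rmat n m src tgt * mat_diag m w * transpose_mat (Rmat n m src tgt) * Lest n m src tgt \<epsilon>
                        * Rmat n m src tgt * mat_diag m w * transpose_mat (Rmat n m src tgt))
                  * Rmat n m src tgt * mat_diag m (\<lambda>l. sqrt (w l)))
           + \<sigma>\<^sub>v\<^sup>2 \<cdot>\<^sub>m (mat_diag m (\<lambda>l. sqrt (w l)) * transpose_mat (Rmat n m src tgt) *
                  minv (Rmat n m src tgt * mat_diag m w * transpose_mat (Rmat n m src tgt))
                  * Rmat n m src tgt * mat_diag m (\<lambda>l. sqrt (w l)))))"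
proof -
  interpret noisy_network n m src tgt w \<epsilon> \<sigma>\<^sub>w \<sigma>\<^sub>v
    using n2 graph mge tree wpos epos by unfold_locales
  show ?thesis
    unfolding hinf_norm_Pi sigma_max_S using peak_nonneg by simp
qed

end
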